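(* Let $\mathcal M^{(1)},\mathcal M^{(2)}$ be nonzero Hilbert spaces and for $k=1,2$ let $W^{(k)}\in\mathcal B(\ell^2_{\mathcal M^{(k)}})$ be an operator valued unilateral weighted shift with weights $\{W^{(k)}_n\}_{n\ge0}\subseteq\mathcal B(\mathcal M^{(k)})$, each having dense range. For $i\ge1$ put $W^{(k)}_{[i]}=W^{(k)}_{i-1}\cdots W^{(k)}_0$. Then $W^{(1)}\cong W^{(2)}$ if and only if there is a unitary isomorphism $U_0:\mathcal M^{(1)}\to\mathcal M^{(2)}$ with $|W^{(1)}_{[i]}|=U_0^*|W^{(2)}_{[i]}|U_0$ for all $i\ge1$.
   Context: For a nonzero Hilbert space $\mathcal M$, $\ell^2_{\mathcal M}$ is the space of square-summable sequences in $\mathcal M$; the operator valued unilateral weighted shift with uniformly bounded weights $\{W_n\}\subseteq\mathcal B(\mathcal M)$ is $W(h_0,h_1,\ldots)=(0,W_0h_0,W_1h_1,\ldots)$. $|A|=(A^*A)^{1/2}$. $\cong$ denotes unitary equivalence. *)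

theory Defs
  imports "HOL-Analysis.Analysis"
begin

text \<open>HOL-Analysis only provides real inner product spaces, so we introduce complex
Hilbert spaces as a type class: a complete real normed vector space with a compatible
complex scalar multiplication and a complex inner product (linear in the second
argument, conjugate linear in the first) inducing the norm.\<close>

class complex_hilbert = real_normed_vector + complete_space +
  fixes scaleC :: "complex \<Rightarrow> 'a \<Rightarrow> 'a" (infixr \<open>*\<^sub>C\<close> 75)
    and cinner :: "'a \<Rightarrow> 'a \<Rightarrow> complex"
  assumes scaleC_add_right: "a *\<^sub>C (x + y) = a *\<^sub>C x + a *\<^sub>C y"
    and scaleC_add_left: "(a + b) *\<^sub>C x = a *\<^sub>C x + b *\<^sub>C x"
    and scaleC_scaleC: "a *\<^sub>C (b *\<^sub>C x) = (a * b) *\<^sub>C x"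
    and scaleC_one: "1 *\<^sub>C x = x"
    and scaleC_of_real: "(complex_of_real r) *\<^sub>C x = r *\<^sub>R x"
    and cinner_cnj_commute: "cinner x y = cnj (cinner y x)"
    and cinner_add_right: "cinner x (y + z) = cinner x y + cinner x z"
    and cinner_scaleC_right: "cinner x (a *\<^sub>C y) = a * cinner x y"
    and cinner_self_norm: "cinner x x = complex_of_real ((norm x)\<^sup>2)"

definition bounded_clinear :: "('a::complex_hilbert \<Rightarrow> 'b::complex_hilbert) \<Rightarrow> bool" where
  "bounded_clinear T \<longleftrightarrow>
     (\<forall>x y. T (x + y) = T x + T y) \<and> (\<forall>a x. T (a *\<^sub>C x) = a *\<^sub>C T x) \<and>
     (\<exists>K. \<forall>x. norm (T x) \<le> norm x * K)"

definition adjoint :: "('a::complex_hilbert \<Rightarrow> 'b::complex_hilbert) \<Rightarrow> ('b \<Rightarrow> 'a)" where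
  "adjoint T = (THE S. \<forall>x y. cinner (T x) y = cinner x (S y))"

definition positive_op :: "('a::complex_hilbert \<Rightarrow> 'a) \<Rightarrow> bool" where
  "positive_op S \<longleftrightarrow> bounded_clinear S \<and>
     (\<forall>x. Im (cinner x (S x)) = 0 \<and> 0 \<le> Re (cinner x (S x)))"

definition op_sqrt :: "('a::complex_hilbert \<Rightarrow> 'a) \<Rightarrow> ('a \<Rightarrow> 'a)" where
  "op_sqrt P = (THE S. positive_op S \<and> S \<circ> S = P)"

definition op_abs :: "('a::complex_hilbert \<Rightarrow> 'b::complex_hilbert) \<Rightarrow> ('a \<Rightarrow> 'a)" where
  "op_abs A = op_sqrt (adjoint A \<circ> A)"

definition unitary :: "('a::complex_hilbert \<Rightarrow> 'b::complex_hilbert) \<Rightarrow> bool" where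
  "unitary U \<longleftrightarrow> bounded_clinear U \<and> surj U \<and> (\<forall>x. norm (U x) = norm x)"

definition l2seq :: "(nat \<Rightarrow> 'a::complex_hilbert) set" where
  "l2seq = {h. summable (\<lambda>n. (norm (h n))\<^sup>2)}"

definition l2norm :: "(nat \<Rightarrow> 'a::complex_hilbert) \<Rightarrow> real" where
  "l2norm h = sqrt (\<Sum>n. (norm (h n))\<^sup>2)"

definition unitary_l2 :: "((nat \<Rightarrow> 'a::complex_hilbert) \<Rightarrow> (nat \<Rightarrow> 'b::complex_hilbert)) \<Rightarrow> bool" where
  "unitary_l2 V \<longleftrightarrow>
     (\<forall>h\<in>l2seq. V h \<in> l2seq) \<and> (\<forall>g\<in>l2seq. \<exists>h\<in>l2seq. V h = g) \<and>
     (\<forall>h\<in>l2seq. \<forall>g\<in>l2seq. V (\<lambda>n. h n + g n) = (\<lambda>n. V h n + V g n)) \<and>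
     (\<forall>a. \<forall>h\<in>l2seq. V (\<lambda>n. a *\<^sub>C h n) = (\<lambda>n. a *\<^sub>C V h n)) \<and>
     (\<forall>h\<in>l2seq. l2norm (V h) = l2norm h)"

definition unit_equiv_l2 ::
  "((nat \<Rightarrow> 'a::complex_hilbert) \<Rightarrow> (nat \<Rightarrow> 'a)) \<Rightarrow> ((nat \<Rightarrow> 'b::complex_hilbert) \<Rightarrow> (nat \<Rightarrow> 'b)) \<Rightarrow> bool" where
  "unit_equiv_l2 A B \<longleftrightarrow> (\<exists>V. unitary_l2 V \<and> (\<forall>h\<in>l2seq. V (A h) = B (V h)))"

definition wshift :: "(nat \<Rightarrow> 'a::complex_hilbert \<Rightarrow> 'a) \<Rightarrow> (nat \<Rightarrow> 'a) \<Rightarrow> (nat \<Rightarrow> 'a)" where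
  "wshift W h = (\<lambda>n. case n of 0 \<Rightarrow> 0 | Suc m \<Rightarrow> W m (h m))"

definition shift_weights_dense :: "(nat \<Rightarrow> 'a::complex_hilbert \<Rightarrow> 'a) \<Rightarrow> bool" where
  "shift_weights_dense W \<longleftrightarrow>
     (\<forall>n. bounded_clinear (W n)) \<and> (\<exists>C. \<forall>n x. norm (W n x) \<le> C * norm x) \<and>
     (\<forall>n. closure (range (W n)) = UNIV)"

text \<open>\<open>W\<^sub>[\<^sub>i\<^sub>] = W\<^sub>i\<^sub>-\<^sub>1 \<cdots> W\<^sub>0\<close> (with \<open>W\<^sub>[\<^sub>0\<^sub>] = id\<close>, unused).\<close>
primrec wprod :: "(nat \<Rightarrow> 'a \<Rightarrow> 'a) \<Rightarrow> nat \<Rightarrow> 'a \<Rightarrow> 'a" where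
  "wprod W 0 = id"
| "wprod W (Suc i) = W i \<circ> wprod W i"

end

theory Submission
  imports Defs
begin

text \<open>Let \<open>V\<close> be a unitary intertwining the two shifts. Since every weight has dense range, a
sequence is orthogonal to the range of a shift iff it vanishes off degree 0; phrased through norms
(0 is a nearest point of the range), this property is visibly preserved by \<open>V\<close>. Hence \<open>V\<close> maps
degree 0 onto degree 0 by a unitary \<open>U\<^sub>0\<close>, and applying the intertwining relation \<open>i\<close> times gives
\<open>\<parallel>W\<^sup>(\<^sup>1\<^sup>)\<^sub>[\<^sub>i\<^sub>] x\<parallel> = \<parallel>W\<^sup>(\<^sup>2\<^sup>)\<^sub>[\<^sub>i\<^sub>] U\<^sub>0 x\<parallel>\<close>. Conversely, these norm identities and the density of the ranges
yield unitaries \<open>U\<^sub>i\<close> with \<open>U\<^sub>i W\<^sup>(\<^sup>1\<^sup>)\<^sub>[\<^sub>i\<^sub>] = W\<^sup>(\<^sup>2\<^sup>)\<^sub>[\<^sub>i\<^sub>] U\<^sub>0\<close>; they intertwine the weights, so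
\<open>\<bigoplus> U\<^sub>i\<close> intertwines the shifts. Finally \<open>|T\<^sub>1| = U\<^sup>*|T\<^sub>2|U\<close> iff \<open>\<parallel>T\<^sub>1 x\<parallel> = \<parallel>T\<^sub>2 U x\<parallel>\<close> for all \<open>x\<close>,
by uniqueness of positive square roots. Square roots are constructed in the Banach algebra of
bounded operators from the binomial series of \<open>1 - \<surd>(1 - t)\<close>.\<close>

section \<open>Complex inner product spaces\<close>

lemma cinner_add_left: "cinner (x + y) z = cinner x z + cinner y z"
  by (metis cinner_add_right cinner_cnj_commute complex_cnj_add)

lemma cinner_scaleC_left: "cinner (a *\<^sub>C x) y = cnj a * cinner x y"
  by (metis cinner_cnj_commute cinner_scaleC_right complex_cnj_mult)

lemma scaleC_zero_right [simp]: "a *\<^sub>C 0 = 0"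
  by (metis add_cancel_right_right scaleC_add_right add_0)

lemma scaleC_minus_right: "a *\<^sub>C (- x) = - (a *\<^sub>C x)"
  by (metis add_eq_0_iff left_minus scaleC_add_right scaleC_zero_right)

lemma scaleC_diff_right: "a *\<^sub>C (x - y) = a *\<^sub>C x - a *\<^sub>C y"
  by (metis diff_conv_add_uminus scaleC_add_right scaleC_minus_right)

lemma scaleR_scaleC: "r *\<^sub>R (a *\<^sub>C x) = (complex_of_real r * a) *\<^sub>C x"
  by (metis scaleC_of_real scaleC_scaleC)

lemma scaleC_scaleR: "a *\<^sub>C (r *\<^sub>R x) = (complex_of_real r * a) *\<^sub>C x"
  by (metis scaleC_of_real scaleC_scaleC mult.commute)

lemma cinner_zero_left [simp]: "cinner 0 y = 0"
  by (metis add_cancel_right_right cinner_add_left add_0)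

lemma cinner_zero_right [simp]: "cinner x 0 = 0"
  by (metis add_cancel_right_right cinner_add_right add_0)

lemma cinner_minus_left: "cinner (- x) y = - cinner x y"
  by (metis add_eq_0_iff cinner_add_left cinner_zero_left left_minus)

lemma cinner_minus_right: "cinner x (- y) = - cinner x y"
  by (metis add_eq_0_iff cinner_add_right cinner_zero_right left_minus)

lemma cinner_diff_left: "cinner (x - y) z = cinner x z - cinner y z"
  by (simp only: diff_conv_add_uminus cinner_add_left cinner_minus_left)

lemma cinner_diff_right: "cinner x (y - z) = cinner x y - cinner x z"
  by (simp only: diff_conv_add_uminus cinner_add_right cinner_minus_right)

lemma cinner_scaleR_left: "cinner (r *\<^sub>R x) y = complex_of_real r * cinner x y"
  by (metis cinner_scaleC_left complex_cnj_complex_of_real scaleC_of_real)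

lemma cinner_scaleR_right: "cinner x (r *\<^sub>R y) = complex_of_real r * cinner x y"
  by (metis cinner_scaleC_right scaleC_of_real)

lemma cinner_self_Re: "Re (cinner x x) = (norm x)\<^sup>2"
  by (simp add: cinner_self_norm)

lemma cinner_self_Im: "Im (cinner x x) = 0"
  by (simp add: cinner_self_norm)

lemma norm_scaleC: "norm (a *\<^sub>C x) = cmod a * norm x"
proof -
  have "complex_of_real ((norm (a *\<^sub>C x))\<^sup>2) = cinner (a *\<^sub>C x) (a *\<^sub>C x)"
    by (simp add: cinner_self_norm)
  also have "\<dots> = cnj a * a * cinner x x"
    by (simp add: cinner_scaleC_left cinner_scaleC_right)
  also have "\<dots> = complex_of_real ((cmod a * norm x)\<^sup>2)"
    by (metis cinner_self_norm complex_norm_square mult.commute of_real_mult power_mult_distrib)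
  finally have "(norm (a *\<^sub>C x))\<^sup>2 = (cmod a * norm x)\<^sup>2"
    using of_real_eq_iff by blast
  then show ?thesis
    by (simp add: power2_eq_iff_nonneg)
qed

lemma bounded_linear_scaleC: "bounded_linear (\<lambda>x. a *\<^sub>C x)"
proof
  show "a *\<^sub>C (x + y) = a *\<^sub>C x + a *\<^sub>C y" for x y
    by (rule scaleC_add_right)
  show "a *\<^sub>C (r *\<^sub>R x) = r *\<^sub>R (a *\<^sub>C x)" for r x
    by (simp add: scaleC_scaleR scaleR_scaleC)
  show "\<exists>K. \<forall>x. norm (a *\<^sub>C x) \<le> norm x * K"
    by (rule exI [of _ "cmod a"]) (simp add: norm_scaleC mult.commute)
qed

lemma cinner_eqI: "(\<And>x. cinner x y = cinner x z) \<Longrightarrow> y = z"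
  by (metis cinner_diff_right cinner_self_norm diff_eq_diff_eq diff_self eq_iff_diff_eq_0
      norm_eq_zero of_real_eq_0_iff zero_eq_power2)

lemma norm_add_sq: "(norm (u + v))\<^sup>2 = (norm u)\<^sup>2 + (norm v)\<^sup>2 + 2 * Re (cinner u v)"
proof -
  have "(norm (u + v))\<^sup>2 = Re (cinner u u) + Re (cinner v v) + Re (cinner u v) + Re (cinner v u)"
    by (simp add: cinner_self_Re [symmetric] cinner_add_left cinner_add_right)
  also have "Re (cinner v u) = Re (cinner u v)"
    by (subst cinner_cnj_commute) simp
  finally show ?thesis
    by (simp add: cinner_self_Re)
qed

lemma norm_diff_sq: "(norm (u - v))\<^sup>2 = (norm u)\<^sup>2 + (norm v)\<^sup>2 - 2 * Re (cinner u v)"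
  using norm_add_sq [of u "- v"] by (simp add: cinner_minus_right)

lemma norm_diff_projection_sq:
  assumes "y \<noteq> 0"
  shows "(norm (x - (cinner y x / complex_of_real ((norm y)\<^sup>2)) *\<^sub>C y))\<^sup>2
         = (norm x)\<^sup>2 - (cmod (cinner y x))\<^sup>2 / (norm y)\<^sup>2"
proof -
  define N where "N = (norm y)\<^sup>2"
  define z where "z = cinner y x"
  define c where "c = z / complex_of_real N"
  have N: "N > 0"
    using assms by (simp add: N_def)
  have "cinner (x - c *\<^sub>C y) (x - c *\<^sub>C y)
       = cinner x x - c * cinner x y - cnj c * cinner y x + cnj c * c * cinner y y"
    by (simp add: cinner_diff_left cinner_diff_right cinner_scaleC_left cinner_scaleC_right
        algebra_simps)
  also have "\<dots> = cinner x x - c * cnj z - cnj c * z + cnj c * c * complex_of_real N"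
    by (simp add: z_def N_def cinner_self_norm cinner_cnj_commute [of x y])
  also have "\<dots> = cinner x x - z * cnj z / complex_of_real N"
    using N by (simp add: c_def field_simps power2_eq_square)
  also have "\<dots> = cinner x x - complex_of_real ((cmod z)\<^sup>2 / N)"
    by (simp only: complex_norm_square [symmetric] of_real_divide)
  finally show ?thesis
    by (metis Re_complex_of_real c_def cinner_self_Re minus_complex.sel(1) N_def z_def)
qed

lemma cinner_Cauchy_Schwarz: "cmod (cinner x y) \<le> norm x * norm y"
proof (cases "y = 0")
  case False
  have "(cmod (cinner y x))\<^sup>2 / (norm y)\<^sup>2 \<le> (norm x)\<^sup>2"
    using norm_diff_projection_sq [OF False, of x] by (metis diff_ge_0_iff_ge zero_le_power2)
  then have "(cmod (cinner y x))\<^sup>2 \<le> (norm x * norm y)\<^sup>2"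
    using False by (simp add: field_simps power_mult_distrib)
  then have "cmod (cinner y x) \<le> norm x * norm y"
    by (simp add: power2_le_iff_abs_le)
  then show ?thesis
    by (metis complex_mod_cnj cinner_cnj_commute)
qed simp

section \<open>Bounded complex-linear maps\<close>

lemma bounded_clinearD:
  assumes "bounded_clinear T"
  shows "T (x + y) = T x + T y" "T (a *\<^sub>C x) = a *\<^sub>C T x"
  using assms unfolding bounded_clinear_def by auto

lemma bounded_clinear_bound:
  assumes "bounded_clinear T"
  obtains K where "K \<ge> 0" "\<And>x. norm (T x) \<le> norm x * K"
proof -
  obtain K where K: "\<And>x. norm (T x) \<le> norm x * K"
    using assms unfolding bounded_clinear_def by auto
  have "norm (T x) \<le> norm x * max K 0" for x
    using K [of x] by (smt (verit) mult_left_mono norm_ge_zero max.cobounded1)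
  then show ?thesis
    using that [of "max K 0"] by auto
qed

lemma bounded_clinear_imp_bounded_linear:
  assumes "bounded_clinear T"
  shows "bounded_linear T"
proof
  show "T (x + y) = T x + T y" for x y
    using bounded_clinearD [OF assms] by auto
  show "T (r *\<^sub>R x) = r *\<^sub>R T x" for r x
    using bounded_clinearD(2) [OF assms, of "complex_of_real r" x] by (simp add: scaleC_of_real)
  show "\<exists>K. \<forall>x. norm (T x) \<le> norm x * K"
    using assms unfolding bounded_clinear_def by auto
qed

lemma bounded_clinearI:
  assumes "bounded_linear T" "\<And>a x. T (a *\<^sub>C x) = a *\<^sub>C T x"
  shows "bounded_clinear T"
  using assms unfolding bounded_clinear_def
  by (metis bounded_linear.bounded bounded_linear.axioms(1) linear_add mult.commute)

lemma bounded_clinear_zero: "bounded_clinear T \<Longrightarrow> T 0 = 0"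
  using bounded_clinear_imp_bounded_linear linear_simps(3) bounded_linear.linear by blast

lemma bounded_clinear_diff: "bounded_clinear T \<Longrightarrow> T (x - y) = T x - T y"
  using bounded_clinear_imp_bounded_linear bounded_linear.linear linear_diff by blast

lemma continuous_on_bounded_clinear: "bounded_clinear T \<Longrightarrow> continuous_on S T"
  by (rule linear_continuous_on [OF bounded_clinear_imp_bounded_linear])

lemma bounded_clinear_id: "bounded_clinear (id :: 'a::complex_hilbert \<Rightarrow> 'a)"
  unfolding bounded_clinear_def by (auto intro!: exI [of _ 1])

lemma bounded_clinear_compose:
  assumes "bounded_clinear S" "bounded_clinear T"
  shows "bounded_clinear (S \<circ> T)"
proof -
  obtain K1 where K1: "K1 \<ge> 0" "\<And>x. norm (S x) \<le> norm x * K1"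
    using bounded_clinear_bound [OF assms(1)] by blast
  obtain K2 where K2: "\<And>x. norm (T x) \<le> norm x * K2"
    using bounded_clinear_bound [OF assms(2)] by blast
  have "norm (S (T x)) \<le> norm x * (K2 * K1)" for x
    using K1(2) [of "T x"] mult_right_mono [OF K2 [of x] K1(1)] by (simp add: mult.assoc)
  then show ?thesis
    using assms unfolding bounded_clinear_def by auto
qed

lemma cinner_eq_if_norm_eq:
  fixes f :: "'a::complex_hilbert \<Rightarrow> 'b::complex_hilbert" and g :: "'a \<Rightarrow> 'c::complex_hilbert"
  assumes f: "\<And>x y. f (x + y) = f x + f y" "\<And>a x. f (a *\<^sub>C x) = a *\<^sub>C f x"
    and g: "\<And>x y. g (x + y) = g x + g y" "\<And>a x. g (a *\<^sub>C x) = a *\<^sub>C g x"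
    and n: "\<And>x. norm (f x) = norm (g x)"
  shows "cinner (f x) (f y) = cinner (g x) (g y)"
proof -
  have f_diff: "f (x - y) = f x - f y" and g_diff: "g (x - y) = g x - g y" for x y
    using f g by (metis add_diff_cancel diff_add_cancel)+
  have polar: "4 * Re (cinner u v) = (norm (u + v))\<^sup>2 - (norm (u - v))\<^sup>2"
    for u v :: "'d::complex_hilbert"
    using norm_add_sq [of u v] norm_diff_sq [of u v] by simp
  have re: "Re (cinner (f x) (f y)) = Re (cinner (g x) (g y))" for x y
    using polar [of "f x" "f y"] polar [of "g x" "g y"] n [of "x + y"] n [of "x - y"]
    by (simp add: f g f_diff g_diff)
  have "Im (cinner (f x) (f y)) = Im (cinner (g x) (g y))"
    using re [of x "(- \<i>) *\<^sub>C y"] by (simp add: f(2) g(2) cinner_scaleC_right)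
  then show ?thesis
    using re [of x y] by (simp add: complex_eqI)
qed

lemma positive_op_bounded_clinear: "positive_op S \<Longrightarrow> bounded_clinear S"
  by (simp add: positive_op_def)

lemma positive_op_self_adjoint:
  assumes "positive_op S"
  shows "cinner (S x) y = cinner x (S y)"
proof -
  have bc: "bounded_clinear S"
    using assms by (rule positive_op_bounded_clinear)
  have im0: "Im (cinner z (S z)) = 0" for z
    using assms unfolding positive_op_def by auto
  define q where "q u v = cinner u (S v)" for u v
  have q_add: "q (u1 + u2) (v1 + v2) = q u1 v1 + q u1 v2 + q u2 v1 + q u2 v2" for u1 u2 v1 v2
    by (simp add: q_def bounded_clinearD [OF bc] cinner_add_left cinner_add_right)
  have q_scale: "q (a *\<^sub>C u) (b *\<^sub>C v) = cnj a * b * q u v" for a b u v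
    by (simp add: q_def bounded_clinearD [OF bc] cinner_scaleC_left cinner_scaleC_right)
  have "Im (q x y + q y x) = 0"
    using im0 [of "x + y"] im0 [of x] im0 [of y] q_add [of x y x y] by (simp add: q_def)
  moreover have "Re (q x y - q y x) = 0"
    using im0 [of "x + \<i> *\<^sub>C y"] im0 [of x] im0 [of y] q_add [of x "\<i> *\<^sub>C y" x "\<i> *\<^sub>C y"]
      q_scale [of 1 x "\<i>" y] q_scale [of "\<i>" y 1 x] q_scale [of "\<i>" y "\<i>" y]
    by (simp add: q_def scaleC_one)
  ultimately have "q x y = cnj (q y x)"
    by (simp add: complex_eq_iff)
  then show ?thesis
    by (simp add: q_def cinner_cnj_commute [of "S x" y])
qed

section \<open>Riesz representation and adjoints\<close>

lemma Cauchy_if_norm_diff_sq_le: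
  fixes X :: "nat \<Rightarrow> 'a::real_normed_vector"
  assumes bound: "\<And>m n. (norm (X m - X n))\<^sup>2 \<le> c / Suc m + c / Suc n" and c: "0 \<le> c"
  shows "Cauchy X"
proof (rule metric_CauchyI)
  fix e :: real assume e: "0 < e"
  obtain M :: nat where M: "2 * c / e\<^sup>2 < M"
    using reals_Archimedean2 by blast
  have "0 < e\<^sup>2"
    using e by simp
  then have M': "2 * c / Suc M < e\<^sup>2"
    using M by (simp add: field_simps, linarith)
  have "dist (X m) (X n) < e" if "m \<ge> M" "n \<ge> M" for m n
  proof -
    have "c / Suc m \<le> c / Suc M" "c / Suc n \<le> c / Suc M"
      using that c by (simp_all add: divide_left_mono)
    then have "(norm (X m - X n))\<^sup>2 < e\<^sup>2"
      using bound [of m n] M' by linarith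
    then show ?thesis
      using e by (simp add: dist_norm power_less_imp_less_base)
  qed
  then show "\<exists>M. \<forall>m\<ge>M. \<forall>n\<ge>M. dist (X m) (X n) < e"
    by blast
qed

lemma nearest_point_exists:
  fixes N :: "'a::complex_hilbert set"
  assumes "closed N" "convex N" "N \<noteq> {}"
  obtains m where "m \<in> N" "\<And>v. v \<in> N \<Longrightarrow> norm (x - m) \<le> norm (x - v)"
proof -
  define d where "d = infdist x N"
  have d_le: "d \<le> norm (x - v)" if "v \<in> N" for v
    using infdist_le [OF that, of x] by (simp add: d_def dist_norm)
  have d0: "0 \<le> d"
    by (simp add: d_def infdist_nonneg)
  have "\<exists>m\<in>N. (norm (x - m))\<^sup>2 < d\<^sup>2 + 1 / Suc n" for n
  proof -
    have "d < sqrt (d\<^sup>2 + 1 / Suc n)"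
      using d0 by (simp add: real_less_rsqrt)
    moreover have "bdd_below (dist x ` N)"
      by (auto intro!: bdd_belowI [of _ 0])
    ultimately obtain m where m: "m \<in> N" "dist x m < sqrt (d\<^sup>2 + 1 / Suc n)"
      using cINF_less_iff [OF assms(3)] unfolding d_def infdist_notempty [OF assms(3)] by blast
    then have "(dist x m)\<^sup>2 < (sqrt (d\<^sup>2 + 1 / Suc n))\<^sup>2"
      by (intro power_strict_mono) auto
    then show ?thesis
      using m(1) by (auto simp: dist_norm)
  qed
  then obtain ms where ms: "\<And>n. ms n \<in> N" "\<And>n. (norm (x - ms n))\<^sup>2 < d\<^sup>2 + 1 / Suc n"
    by metis
  \<comment> \<open>parallelogram law, with the midpoint of \<open>ms n\<close> and \<open>ms k\<close> at distance \<open>\<ge> d\<close> from \<open>x\<close>\<close>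
  have "(norm (ms n - ms k))\<^sup>2 \<le> 2 / Suc n + 2 / Suc k" for n k
  proof -
    have "(1/2) *\<^sub>R ms n + (1/2) *\<^sub>R ms k \<in> N"
      using convexD [OF assms(2) ms(1) ms(1)] by simp
    then have "d\<^sup>2 \<le> (norm (x - ((1/2) *\<^sub>R ms n + (1/2) *\<^sub>R ms k)))\<^sup>2"
      using d_le d0 power_mono by blast
    moreover have "x - ms k + (x - ms n) = 2 *\<^sub>R (x - ((1/2) *\<^sub>R ms n + (1/2) *\<^sub>R ms k))"
      by (simp add: algebra_simps scaleR_2)
    ultimately show ?thesis
      using norm_add_sq [of "x - ms k" "x - ms n"] norm_diff_sq [of "x - ms k" "x - ms n"]
        ms(2) [of n] ms(2) [of k] by (simp add: power_mult_distrib)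
  qed
  then have "Cauchy ms"
    by (rule Cauchy_if_norm_diff_sq_le) simp
  then obtain m where lim: "ms \<longlonglongrightarrow> m"
    using Cauchy_convergent_iff convergent_def by blast
  have "m \<in> N"
    using assms(1) ms(1) lim closed_sequentially by blast
  moreover have "(norm (x - m))\<^sup>2 \<le> d\<^sup>2"
  proof (rule LIMSEQ_le)
    show "(\<lambda>n. (norm (x - ms n))\<^sup>2) \<longlonglongrightarrow> (norm (x - m))\<^sup>2"
      by (intro tendsto_intros lim)
    show "(\<lambda>n. d\<^sup>2 + 1 / Suc n) \<longlonglongrightarrow> d\<^sup>2"
      using tendsto_add [OF tendsto_const LIMSEQ_Suc [OF lim_inverse_n']] by (simp add: inverse_eq_divide)
  qed (use ms(2) less_imp_le in blast)
  then have "norm (x - m) \<le> d"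
    using d0 power2_le_imp_le by blast
  ultimately show ?thesis
    using that d_le by force
qed

lemma nearest_point_orthogonal:
  fixes N :: "'a::complex_hilbert set"
  assumes N_add: "\<And>a b. a \<in> N \<Longrightarrow> b \<in> N \<Longrightarrow> a + b \<in> N"
    and N_scale: "\<And>c a. a \<in> N \<Longrightarrow> c *\<^sub>C a \<in> N"
    and m: "m \<in> N" and nearest: "\<And>v. v \<in> N \<Longrightarrow> norm (x - m) \<le> norm (x - v)"
    and v: "v \<in> N"
  shows "cinner v (x - m) = 0"
proof (cases "v = 0")
  case False
  define w where "w = (cinner v (x - m) / complex_of_real ((norm v)\<^sup>2)) *\<^sub>C v"
  have "norm (x - m) \<le> norm (x - m - w)"
    using nearest [OF N_add [OF m N_scale [OF v]]] by (simp add: w_def algebra_simps)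
  then have "(cmod (cinner v (x - m)))\<^sup>2 / (norm v)\<^sup>2 \<le> 0"
    using norm_diff_projection_sq [OF False, of "x - m"] power_mono norm_ge_zero
    unfolding w_def by (smt (verit))
  then show ?thesis
    using False by (simp add: divide_le_0_iff)
qed simp

lemma riesz_representation:
  fixes \<phi> :: "'a::complex_hilbert \<Rightarrow> complex"
  assumes add: "\<And>x y. \<phi> (x + y) = \<phi> x + \<phi> y" and hom: "\<And>a x. \<phi> (a *\<^sub>C x) = a * \<phi> x"
    and bounded: "\<And>x. cmod (\<phi> x) \<le> K * norm x"
  shows "\<exists>z. \<forall>x. \<phi> x = cinner z x"
proof (cases "\<forall>x. \<phi> x = 0")
  case False
  then obtain x0 where x0: "\<phi> x0 \<noteq> 0"
    by auto
  have lin: "bounded_linear \<phi>"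
  proof
    show "\<phi> (r *\<^sub>R x) = r *\<^sub>R \<phi> x" for r x
      using hom [of "complex_of_real r" x] by (simp add: scaleC_of_real scaleR_conv_of_real)
    show "\<exists>K. \<forall>x. norm (\<phi> x) \<le> norm x * K"
      using bounded by (metis mult.commute norm_complex_def)
  qed (rule add)
  define N where "N = {x. \<phi> x = 0}"
  have N_add: "a \<in> N \<Longrightarrow> b \<in> N \<Longrightarrow> a + b \<in> N" and N_scale: "a \<in> N \<Longrightarrow> c *\<^sub>C a \<in> N" for a b c
    by (simp_all add: N_def add hom)
  have "closed N"
    unfolding N_def using linear_continuous_on [OF lin] by (intro closed_Collect_eq) auto
  moreover have "convex N"
    unfolding convex_def using N_add N_scale by (metis scaleC_of_real)
  moreover have "0 \<in> N"
    using N_scale [of x0 0] add [of 0 0] by (simp add: N_def)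
  ultimately obtain m where m: "m \<in> N" "\<And>v. v \<in> N \<Longrightarrow> norm (x0 - m) \<le> norm (x0 - v)"
    using nearest_point_exists by blast
  define u where "u = x0 - m"
  have \<phi>_u: "\<phi> u = \<phi> x0"
    using m(1) add [of u m] by (simp add: u_def N_def)
  have "cinner u x = (\<phi> x / \<phi> u) * cinner u u" for x
  proof -
    have "x - (\<phi> x / \<phi> u) *\<^sub>C u \<in> N"
      using add [of "x - (\<phi> x / \<phi> u) *\<^sub>C u" "(\<phi> x / \<phi> u) *\<^sub>C u"] \<phi>_u x0 by (simp add: N_def hom)
    then have "cinner (x - (\<phi> x / \<phi> u) *\<^sub>C u) u = 0"
      using nearest_point_orthogonal [OF N_add N_scale m] unfolding u_def by blast
    then have "cinner u (x - (\<phi> x / \<phi> u) *\<^sub>C u) = 0"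
      by (metis cinner_cnj_commute complex_cnj_zero)
    then show ?thesis
      by (simp add: cinner_diff_right cinner_scaleC_right)
  qed
  moreover have "cinner u u \<noteq> 0"
    using \<phi>_u x0 \<open>0 \<in> N\<close> by (auto simp: cinner_self_norm N_def)
  ultimately have "\<phi> x = cinner (cnj (\<phi> u / cinner u u) *\<^sub>C u) x" for x
    using \<phi>_u x0 by (simp add: cinner_scaleC_left field_simps)
  then show ?thesis
    by blast
qed (auto intro: exI [of _ 0])

lemma adjoint_exists:
  fixes T :: "'a::complex_hilbert \<Rightarrow> 'b::complex_hilbert"
  assumes "bounded_clinear T"
  shows "\<exists>S. \<forall>x y. cinner (T x) y = cinner x (S y)"
proof -
  obtain K where K: "K \<ge> 0" "\<And>x. norm (T x) \<le> norm x * K"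
    using bounded_clinear_bound [OF assms] by blast
  have "\<exists>z. \<forall>x. cinner y (T x) = cinner z x" for y
  proof (rule riesz_representation)
    show "cinner y (T (x1 + x2)) = cinner y (T x1) + cinner y (T x2)" for x1 x2
      by (simp add: bounded_clinearD [OF assms] cinner_add_right)
    show "cinner y (T (a *\<^sub>C x)) = a * cinner y (T x)" for a x
      by (simp add: bounded_clinearD [OF assms] cinner_scaleC_right)
    show "cmod (cinner y (T x)) \<le> (norm y * K) * norm x" for x
      using cinner_Cauchy_Schwarz [of y "T x"] mult_left_mono [OF K(2) [of x], of "norm y"]
      by (simp add: algebra_simps)
  qed
  then obtain S where "\<And>y x. cinner y (T x) = cinner (S y) x"
    by metis
  then show ?thesis
    by (metis cinner_cnj_commute)
qed

lemma cinner_adjoint: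
  fixes T :: "'a::complex_hilbert \<Rightarrow> 'b::complex_hilbert"
  assumes "bounded_clinear T"
  shows "cinner (T x) y = cinner x (adjoint T y)"
proof -
  obtain S where S: "\<forall>x y. cinner (T x) y = cinner x (S y)"
    using adjoint_exists [OF assms] by blast
  have "\<forall>x y. cinner (T x) y = cinner x (adjoint T y)"
    unfolding adjoint_def
  proof (rule theI [of _ S])
    show "R = S" if "\<forall>x y. cinner (T x) y = cinner x (R y)" for R
      using that S by (intro ext cinner_eqI) metis
  qed (rule S)
  then show ?thesis
    by blast
qed

lemma bounded_clinear_adjoint:
  fixes T :: "'a::complex_hilbert \<Rightarrow> 'b::complex_hilbert"
  assumes "bounded_clinear T"
  shows "bounded_clinear (adjoint T)"
proof -
  note adj = cinner_adjoint [OF assms]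
  obtain K where K: "K \<ge> 0" "\<And>x. norm (T x) \<le> norm x * K"
    using bounded_clinear_bound [OF assms] by blast
  have "adjoint T (x + y) = adjoint T x + adjoint T y" for x y
    by (rule cinner_eqI) (simp add: adj [symmetric] cinner_add_right)
  moreover have "adjoint T (a *\<^sub>C x) = a *\<^sub>C adjoint T x" for a x
    by (rule cinner_eqI) (simp add: adj [symmetric] cinner_scaleC_right)
  moreover have "norm (adjoint T y) \<le> norm y * K" for y
  proof -
    have "norm (adjoint T y) * norm (adjoint T y) = Re (cinner (T (adjoint T y)) y)"
      by (simp add: adj cinner_self_Re power2_eq_square)
    also have "\<dots> \<le> norm (T (adjoint T y)) * norm y"
      using complex_Re_le_cmod cinner_Cauchy_Schwarz order_trans by blast
    also have "\<dots> \<le> norm (adjoint T y) * (norm y * K)"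
      using mult_right_mono [OF K(2) norm_ge_zero] by (simp add: algebra_simps)
    finally show ?thesis
      using K by (cases "norm (adjoint T y) = 0") (auto simp: mult_le_cancel_left)
  qed
  ultimately show ?thesis
    unfolding bounded_clinear_def by blast
qed

lemma adjoint_eqI:
  fixes T :: "'a::complex_hilbert \<Rightarrow> 'b::complex_hilbert"
  assumes "bounded_clinear T" "\<And>x y. cinner (T x) y = cinner x (S y)"
  shows "adjoint T = S"
  using assms cinner_adjoint [OF assms(1)] by (intro ext cinner_eqI) metis

lemma cinner_unitary:
  assumes "unitary U"
  shows "cinner (U x) (U y) = cinner x y"
proof -
  have "bounded_clinear U"
    using assms by (simp add: unitary_def)
  then show ?thesis
    using cinner_eq_if_norm_eq [of U id] bounded_clinearD [OF \<open>bounded_clinear U\<close>] assms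
    unfolding unitary_def by auto
qed

lemma unitary_adjoint_eq_inv:
  assumes "unitary U"
  shows "adjoint U = inv U"
proof (rule adjoint_eqI)
  show "bounded_clinear U"
    using assms by (simp add: unitary_def)
  have "U (inv U y) = y" for y
    using assms by (simp add: unitary_def surj_f_inv_f)
  then show "cinner (U x) y = cinner x (inv U y)" for x y
    by (metis cinner_unitary [OF assms])
qed

lemma unitary_apply_adjoint:
  assumes "unitary U"
  shows "U (adjoint U y) = y"
  using assms by (simp add: unitary_adjoint_eq_inv unitary_def surj_f_inv_f)

lemma norm_adjoint_unitary:
  assumes "unitary U"
  shows "norm (adjoint U y) = norm y"
proof -
  have "norm (adjoint U y) = norm (U (adjoint U y))"
    using assms by (simp add: unitary_def)
  then show ?thesis
    by (simp add: unitary_apply_adjoint [OF assms])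
qed

section \<open>The Banach algebra of bounded operators\<close>

typedef (overloaded) 'a endo = "UNIV :: ('a::real_normed_vector \<Rightarrow>\<^sub>L 'a) set"
  morphisms blinfun_of_endo Endo
  by simp

setup_lifting type_definition_endo

instantiation endo :: (real_normed_vector) real_normed_vector
begin

lift_definition norm_endo :: "'a endo \<Rightarrow> real" is norm .
lift_definition minus_endo :: "'a endo \<Rightarrow> 'a endo \<Rightarrow> 'a endo" is "(-)" .
lift_definition uminus_endo :: "'a endo \<Rightarrow> 'a endo" is uminus .
lift_definition zero_endo :: "'a endo" is 0 .
lift_definition plus_endo :: "'a endo \<Rightarrow> 'a endo \<Rightarrow> 'a endo" is "(+)" .
lift_definition scaleR_endo :: "real \<Rightarrow> 'a endo \<Rightarrow> 'a endo" is scaleR .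

definition dist_endo :: "'a endo \<Rightarrow> 'a endo \<Rightarrow> real"
  where "dist_endo a b = norm (a - b)"

definition uniformity_endo :: "('a endo \<times> 'a endo) filter"
  where "uniformity_endo = (INF e\<in>{0 <..}. principal {(x, y). dist x y < e})"

definition open_endo :: "'a endo set \<Rightarrow> bool"
  where "open_endo S = (\<forall>x\<in>S. \<forall>\<^sub>F (x', y) in uniformity. x' = x \<longrightarrow> y \<in> S)"

definition sgn_endo :: "'a endo \<Rightarrow> 'a endo"
  where "sgn_endo x = scaleR (inverse (norm x)) x"

instance
  apply standard
  unfolding dist_endo_def open_endo_def sgn_endo_def uniformity_endo_def
  apply (rule refl | (transfer, force simp: norm_triangle_ineq algebra_simps scaleR_add_right
        scaleR_add_left))+
  done

end

instantiation endo :: (real_normed_vector) "{real_normed_algebra, monoid_mult}"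
begin

lift_definition times_endo :: "'a endo \<Rightarrow> 'a endo \<Rightarrow> 'a endo" is "\<lambda>f g. f o\<^sub>L g" .
lift_definition one_endo :: "'a endo" is "id_blinfun" .

instance
proof
  fix a b c :: "'a endo" and r :: real
  show "a * b * c = a * (b * c)"
    by transfer (rule blinfun_eqI, simp)
  show "(a + b) * c = a * c + b * c"
    by transfer (rule blinfun_eqI, simp add: blinfun.add_left)
  show "a * (b + c) = a * b + a * c"
    by transfer (rule blinfun_eqI, simp add: blinfun.add_left blinfun.add_right)
  show "r *\<^sub>R a * b = r *\<^sub>R (a * b)"
    by transfer (rule blinfun_eqI, simp add: blinfun.scaleR_left)
  show "a * r *\<^sub>R b = r *\<^sub>R (a * b)"
    by transfer (rule blinfun_eqI, simp add: blinfun.scaleR_left blinfun.scaleR_right)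
  show "norm (a * b) \<le> norm a * norm b"
    by transfer (rule norm_blinfun_compose)
  show "1 * a = a"
    by transfer (rule blinfun_eqI, simp)
  show "a * 1 = a"
    by transfer (rule blinfun_eqI, simp)
qed

end

instance endo :: (banach) banach
proof
  fix X :: "nat \<Rightarrow> 'a endo"
  assume "Cauchy X"
  then have "Cauchy (\<lambda>n. blinfun_of_endo (X n))"
    unfolding Cauchy_def dist_endo_def dist_norm by (simp add: norm_endo.rep_eq minus_endo.rep_eq)
  then obtain L where "(\<lambda>n. blinfun_of_endo (X n)) \<longlonglongrightarrow> L"
    using Cauchy_convergent_iff convergent_def by blast
  then have "X \<longlonglongrightarrow> Endo L"
    unfolding tendsto_iff dist_endo_def dist_norm
    by (simp add: norm_endo.rep_eq minus_endo.rep_eq Endo_inverse)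
  then show "convergent X"
    by (rule convergentI)
qed

definition endo_apply :: "'a::real_normed_vector endo \<Rightarrow> 'a \<Rightarrow> 'a" where
  "endo_apply A = blinfun_apply (blinfun_of_endo A)"

definition endo_of :: "('a::real_normed_vector \<Rightarrow> 'a) \<Rightarrow> 'a endo" where
  "endo_of f = Endo (Blinfun f)"

lemma endo_apply_simps:
  "endo_apply (A + B) x = endo_apply A x + endo_apply B x"
  "endo_apply (A - B) x = endo_apply A x - endo_apply B x"
  "endo_apply (A * B) x = endo_apply A (endo_apply B x)"
  "endo_apply 1 x = x"
  "endo_apply 0 x = 0"
  "endo_apply (r *\<^sub>R A) x = r *\<^sub>R endo_apply A x"
  unfolding endo_apply_def
  by (simp_all add: plus_endo.rep_eq minus_endo.rep_eq times_endo.rep_eq one_endo.rep_eq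
      zero_endo.rep_eq scaleR_endo.rep_eq blinfun.add_left blinfun.diff_left blinfun.scaleR_left)

lemma norm_endo_apply: "norm (endo_apply A x) \<le> norm A * norm x"
  unfolding endo_apply_def norm_endo.rep_eq by (rule norm_blinfun)

lemma norm_endo_le: "0 \<le> b \<Longrightarrow> (\<And>x. norm (endo_apply A x) \<le> b * norm x) \<Longrightarrow> norm A \<le> b"
  unfolding endo_apply_def norm_endo.rep_eq by (rule norm_blinfun_bound)

lemma bounded_linear_endo_apply: "bounded_linear (endo_apply A)"
  unfolding endo_apply_def by (rule blinfun.bounded_linear_right)

lemma bounded_linear_endo_apply_left: "bounded_linear (\<lambda>A. endo_apply A x)"
proof
  show "endo_apply (A + B) x = endo_apply A x + endo_apply B x" for A B
    by (simp add: endo_apply_simps)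
  show "endo_apply (r *\<^sub>R A) x = r *\<^sub>R endo_apply A x" for r A
    by (simp add: endo_apply_simps)
  show "\<exists>K. \<forall>A. norm (endo_apply A x) \<le> norm A * K"
    using norm_endo_apply by blast
qed

lemma endo_eqI: "(\<And>x. endo_apply A x = endo_apply B x) \<Longrightarrow> A = B"
  unfolding endo_apply_def by (metis blinfun_of_endo_inject blinfun_eqI)

lemma endo_apply_endo_of: "bounded_linear f \<Longrightarrow> endo_apply (endo_of f) = f"
  unfolding endo_apply_def endo_of_def by (simp add: Endo_inverse bounded_linear_Blinfun_apply)

lemma endo_apply_suminf:
  assumes "summable F"
  shows "(\<lambda>k. endo_apply (F k) x) sums endo_apply (suminf F) x"
  using bounded_linear.sums [OF bounded_linear_endo_apply_left summable_sums [OF assms]] .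

lemma norm_power_endo_le_1: "norm (A :: 'a::real_normed_vector endo) \<le> 1 \<Longrightarrow> norm (A ^ k) \<le> 1"
proof (induction k)
  case 0
  show ?case
    by (rule norm_endo_le) (auto simp: endo_apply_simps)
next
  case (Suc k)
  have "norm (A ^ Suc k) \<le> norm A * norm (A ^ k)"
    by (simp add: norm_mult_ineq)
  also have "\<dots> \<le> 1 * 1"
    using Suc by (intro mult_mono) auto
  finally show ?case
    by simp
qed

definition endo_clinear :: "'a::complex_hilbert endo \<Rightarrow> bool" where
  "endo_clinear A \<longleftrightarrow> (\<forall>a x. endo_apply A (a *\<^sub>C x) = a *\<^sub>C endo_apply A x)"

definition endo_self_adjoint :: "'a::complex_hilbert endo \<Rightarrow> bool" where
  "endo_self_adjoint A \<longleftrightarrow> (\<forall>x y. cinner (endo_apply A x) y = cinner x (endo_apply A y))"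

lemma endo_clinear_one: "endo_clinear 1"
  by (simp add: endo_clinear_def endo_apply_simps)

lemma endo_clinear_diff: "endo_clinear A \<Longrightarrow> endo_clinear B \<Longrightarrow> endo_clinear (A - B)"
  by (simp add: endo_clinear_def endo_apply_simps scaleC_diff_right)

lemma endo_clinear_mult: "endo_clinear A \<Longrightarrow> endo_clinear B \<Longrightarrow> endo_clinear (A * B)"
  by (simp add: endo_clinear_def endo_apply_simps)

lemma endo_clinear_scaleR: "endo_clinear A \<Longrightarrow> endo_clinear (r *\<^sub>R A)"
  by (simp add: endo_clinear_def endo_apply_simps scaleR_scaleC scaleC_scaleR mult.commute)

lemma endo_clinear_power: "endo_clinear A \<Longrightarrow> endo_clinear (A ^ k)"
  by (induction k) (auto simp: endo_clinear_one endo_clinear_mult)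

lemma endo_clinear_suminf:
  assumes "summable F" "\<And>k. endo_clinear (F k)"
  shows "endo_clinear (suminf F)"
  unfolding endo_clinear_def
proof (intro allI)
  fix a x
  have "(\<lambda>k. endo_apply (F k) (a *\<^sub>C x)) sums endo_apply (suminf F) (a *\<^sub>C x)"
    by (rule endo_apply_suminf [OF assms(1)])
  moreover have "(\<lambda>k. endo_apply (F k) (a *\<^sub>C x)) sums (a *\<^sub>C endo_apply (suminf F) x)"
    using bounded_linear.sums [OF bounded_linear_scaleC endo_apply_suminf [OF assms(1)]] assms(2)
    by (simp add: endo_clinear_def)
  ultimately show "endo_apply (suminf F) (a *\<^sub>C x) = a *\<^sub>C endo_apply (suminf F) x"
    using sums_unique2 by metis
qed

lemma endo_self_adjoint_one: "endo_self_adjoint 1"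
  by (simp add: endo_self_adjoint_def endo_apply_simps)

lemma endo_self_adjoint_diff:
  "endo_self_adjoint A \<Longrightarrow> endo_self_adjoint B \<Longrightarrow> endo_self_adjoint (A - B)"
  by (simp add: endo_self_adjoint_def endo_apply_simps cinner_diff_left cinner_diff_right)

lemma endo_self_adjoint_scaleR: "endo_self_adjoint A \<Longrightarrow> endo_self_adjoint (r *\<^sub>R A)"
  by (simp add: endo_self_adjoint_def endo_apply_simps cinner_scaleR_left cinner_scaleR_right)

lemma endo_self_adjoint_power: "endo_self_adjoint A \<Longrightarrow> endo_self_adjoint (A ^ k)"
proof (induction k)
  case 0
  show ?case
    by (simp add: endo_self_adjoint_one)
next
  case (Suc k)
  have "A ^ k * A = A ^ Suc k"
    by (simp add: power_commutes)
  then have "cinner (endo_apply (A ^ Suc k) x) y = cinner x (endo_apply (A ^ Suc k) y)" for x y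
    using Suc by (metis endo_self_adjoint_def endo_apply_simps(3) power_Suc)
  then show ?case
    by (simp add: endo_self_adjoint_def)
qed

lemma Im_cinner_self_adjoint: "endo_self_adjoint A \<Longrightarrow> Im (cinner x (endo_apply A x)) = 0"
  unfolding endo_self_adjoint_def
  by (metis cinner_cnj_commute Im_complex_of_real Reals_cnj_iff complex_is_Real_iff)

lemma bounded_linear_cinner_endo_apply: "bounded_linear (\<lambda>B. cinner x (endo_apply B x))"
proof
  show "cinner x (endo_apply (B1 + B2) x) = cinner x (endo_apply B1 x) + cinner x (endo_apply B2 x)"
    for B1 B2
    by (simp add: endo_apply_simps cinner_add_right)
  show "cinner x (endo_apply (r *\<^sub>R B) x) = r *\<^sub>R cinner x (endo_apply B x)" for r B
    by (simp add: endo_apply_simps cinner_scaleR_right scaleR_conv_of_real)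
  have "norm (cinner x (endo_apply B x)) \<le> norm B * (norm x * norm x)" for B
    using cinner_Cauchy_Schwarz [of x "endo_apply B x"]
      mult_left_mono [OF norm_endo_apply [of B x], of "norm x"]
    by (simp add: algebra_simps)
  then show "\<exists>K. \<forall>B. norm (cinner x (endo_apply B x)) \<le> norm B * K"
    by blast
qed

section \<open>Positive square roots\<close>

lemma norm_sq_le_positive_form:
  fixes T :: "'a::complex_hilbert \<Rightarrow> 'a"
  assumes T: "positive_op T" and bound: "\<And>v. norm (T v) \<le> M * norm v" and M: "M > 0"
  shows "(norm (T x))\<^sup>2 \<le> M * Re (cinner x (T x))"
proof -
  \<comment> \<open>expand \<open>0 \<le> \<langle>v, T v\<rangle>\<close> for \<open>v = x - T x / M\<close>\<close>
  define t where "t = 1 / M"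
  define v where "v = x - t *\<^sub>R T x"
  have sa: "cinner (T a) b = cinner a (T b)" for a b
    using T by (rule positive_op_self_adjoint)
  have lin: "linear T"
    using T positive_op_bounded_clinear bounded_clinear_imp_bounded_linear bounded_linear.linear
    by blast
  have "Re (cinner v (T v)) = Re (cinner x (T x)) - 2 * t * (norm (T x))\<^sup>2
      + t * t * Re (cinner (T x) (T (T x)))"
    by (simp add: v_def linear_diff [OF lin] linear_scale [OF lin] cinner_diff_left
        cinner_diff_right cinner_scaleR_left cinner_scaleR_right sa [of x "T x", symmetric] cinner_self_Re
        algebra_simps)
  moreover have "Re (cinner (T x) (T (T x))) \<le> M * (norm (T x))\<^sup>2"
    using complex_Re_le_cmod cinner_Cauchy_Schwarz [of "T x" "T (T x)"]
      mult_left_mono [OF bound [of "T x"] norm_ge_zero [of "T x"]]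
    by (smt (verit) mult.left_commute power2_eq_square)
  moreover have "0 \<le> Re (cinner v (T v))"
    using T by (simp add: positive_op_def)
  ultimately have "0 \<le> Re (cinner x (T x)) - 2 * t * (norm (T x))\<^sup>2 + t * t * (M * (norm (T x))\<^sup>2)"
    by (smt (verit) mult_left_mono zero_le_square)
  also have "t * t * (M * (norm (T x))\<^sup>2) = t * (norm (T x))\<^sup>2"
    using M by (simp add: t_def)
  finally show ?thesis
    using M by (simp add: t_def field_simps)
qed

lemma positive_form_zero_imp_zero:
  assumes T: "positive_op T" and "Re (cinner y (T y)) = 0"
  shows "T y = 0"
proof -
  obtain M where "M > 0" "\<And>v. norm (T v) \<le> M * norm v"
    using bounded_linear.pos_bounded
      [OF bounded_clinear_imp_bounded_linear [OF positive_op_bounded_clinear [OF T]]]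
    by (metis mult.commute)
  then have "(norm (T y))\<^sup>2 \<le> M * Re (cinner y (T y))"
    using norm_sq_le_positive_form [OF T] by blast
  then show ?thesis
    using assms(2) by simp
qed

lemma positive_endo_square_unique:
  fixes X Y :: "'a::complex_hilbert endo"
  assumes X: "positive_op (endo_apply X)" and Y: "positive_op (endo_apply Y)"
    and XY: "X * Y = Y * X" and XX_YY: "X * X = Y * Y"
  shows "X = Y"
proof (rule endo_eqI)
  fix x
  define D where "D = X - Y"
  define y where "y = endo_apply D x"
  \<comment> \<open>\<open>(X + Y) D = X\<^sup>2 - Y\<^sup>2 = 0\<close>, so both nonnegative forms vanish at \<open>y\<close>\<close>
  have "(X + Y) * D = 0"
    unfolding D_def using XX_YY XY by (simp add: algebra_simps)
  then have "cinner y (endo_apply X y) + cinner y (endo_apply Y y) = 0"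
    by (metis cinner_add_right cinner_zero_right endo_apply_simps(1,3,5) y_def)
  then have "Re (cinner y (endo_apply X y)) = 0" "Re (cinner y (endo_apply Y y)) = 0"
    using X Y unfolding positive_op_def
    by (metis add.commute add_nonneg_eq_0_iff plus_complex.sel(1) zero_complex.sel(1))+
  then have "endo_apply X y = 0" "endo_apply Y y = 0"
    using positive_form_zero_imp_zero [OF X] positive_form_zero_imp_zero [OF Y] by blast+
  then have "endo_apply D y = 0"
    by (simp add: D_def endo_apply_simps)
  moreover have "endo_self_adjoint D"
    unfolding D_def using positive_op_self_adjoint [OF X] positive_op_self_adjoint [OF Y]
    by (intro endo_self_adjoint_diff) (simp_all add: endo_self_adjoint_def)
  then have "cinner y y = cinner x (endo_apply D y)"
    by (simp add: y_def endo_self_adjoint_def)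
  ultimately have "y = 0"
    by (simp add: cinner_self_norm)
  then show "endo_apply X x = endo_apply Y x"
    by (simp add: y_def D_def endo_apply_simps)
qed

text \<open>The coefficients of \<open>1 - \<surd>(1 - t) = \<Sum> c\<^sub>n t\<^sup>n\<close>: the series \<open>f\<close> satisfies \<open>f\<^sup>2 = 2 f - t\<close>,
which is the recursion below.\<close>

function sqrt_coeff :: "nat \<Rightarrow> real" where
  "sqrt_coeff n = (if n = 0 then 0 else if n = 1 then 1/2
     else (1/2) * (\<Sum>i\<in>{1..<n}. sqrt_coeff i * sqrt_coeff (n - i)))"
  by auto
termination
  by (relation "Wellfounded.measure id") auto

declare sqrt_coeff.simps [simp del]

lemma sqrt_coeff_0: "sqrt_coeff 0 = 0"
  by (simp add: sqrt_coeff.simps)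

lemma sqrt_coeff_1: "sqrt_coeff (Suc 0) = 1/2"
  by (simp add: sqrt_coeff.simps)

lemma sqrt_coeff_ge_2:
  "n \<ge> 2 \<Longrightarrow> sqrt_coeff n = (1/2) * (\<Sum>i\<in>{1..<n}. sqrt_coeff i * sqrt_coeff (n - i))"
  by (subst sqrt_coeff.simps) simp

lemma sqrt_coeff_nonneg: "sqrt_coeff n \<ge> 0"
proof (induction n rule: less_induct)
  case (less n)
  show ?case
  proof (cases "n \<ge> 2")
    case True
    then show ?thesis
      using less by (auto simp: sqrt_coeff_ge_2 intro!: sum_nonneg mult_nonneg_nonneg)
  next
    case False
    then have "n = 0 \<or> n = 1"
      by auto
    then show ?thesis
      by (auto simp: sqrt_coeff_0 sqrt_coeff_1)
  qed
qed

lemma sqrt_coeff_convolution: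
  "(\<Sum>i\<le>n. sqrt_coeff i * sqrt_coeff (n - i)) = 2 * sqrt_coeff n - (if n = 1 then 1 else 0)"
proof (cases "n \<ge> 2")
  case True
  then have "{..n} = insert 0 (insert n {1..<n})"
    by auto
  then show ?thesis
    using True by (simp add: sum.insert sqrt_coeff_0 sqrt_coeff_ge_2)
next
  case False
  then have "n = 0 \<or> n = 1"
    by auto
  then show ?thesis
    by (auto simp: sqrt_coeff_0 sqrt_coeff_1)
qed

lemma sum_sqrt_coeff_from_2:
  "(\<Sum>n\<in>{2..<N}. sqrt_coeff n) \<le> (1/2) * (\<Sum>k<N - 1. sqrt_coeff k)\<^sup>2"
proof -
  define S where "S = Sigma {2..<N} (\<lambda>n. {1..<n})"
  define g where "g = (\<lambda>(n::nat, i::nat). (i, n - i))"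
  have "(\<Sum>n\<in>{2..<N}. sqrt_coeff n)
      = (1/2) * (\<Sum>n\<in>{2..<N}. \<Sum>i\<in>{1..<n}. sqrt_coeff i * sqrt_coeff (n - i))"
    by (simp add: sum_distrib_left sqrt_coeff_ge_2)
  also have "(\<Sum>n\<in>{2..<N}. \<Sum>i\<in>{1..<n}. sqrt_coeff i * sqrt_coeff (n - i))
      = (\<Sum>p\<in>S. sqrt_coeff (snd p) * sqrt_coeff (fst p - snd p))"
    unfolding S_def by (subst sum.Sigma) (auto simp: split_def)
  also have "\<dots> = (\<Sum>q\<in>g ` S. sqrt_coeff (fst q) * sqrt_coeff (snd q))"
  proof -
    have "inj_on g S"
      unfolding inj_on_def S_def g_def by auto
    from sum.reindex [OF this, of "\<lambda>q. sqrt_coeff (fst q) * sqrt_coeff (snd q)"] show ?thesis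
      by (simp add: g_def case_prod_beta comp_def)
  qed
  also have "\<dots> \<le> (\<Sum>q\<in>{..<N-1} \<times> {..<N-1}. sqrt_coeff (fst q) * sqrt_coeff (snd q))"
    by (rule sum_mono2) (auto simp: S_def g_def sqrt_coeff_nonneg)
  also have "\<dots> = (\<Sum>k<N - 1. sqrt_coeff k)\<^sup>2"
    by (simp add: power2_eq_square sum_product sum.cartesian_product case_prod_beta)
  finally show ?thesis
    by simp
qed

lemma sum_sqrt_coeff_le_1: "(\<Sum>k<N. sqrt_coeff k) \<le> 1"
proof (induction N rule: less_induct)
  case (less N)
  show ?case
  proof (cases "N \<ge> 2")
    case True
    have "{..<N} = insert 0 (insert 1 {2..<N})"
      using True by auto
    then have split: "(\<Sum>k<N. sqrt_coeff k) = 1/2 + (\<Sum>n\<in>{2..<N}. sqrt_coeff n)"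
      by (simp add: sum.insert sqrt_coeff_0 sqrt_coeff_1)
    have "(\<Sum>k<N - 1. sqrt_coeff k)\<^sup>2 \<le> 1"
      using less [of "N - 1"] True by (simp add: power_le_one sum_nonneg sqrt_coeff_nonneg)
    then show ?thesis
      using split sum_sqrt_coeff_from_2 [of N] by linarith
  next
    case False
    then have "N = 0 \<or> N = 1"
      by auto
    then show ?thesis
      by (auto simp: sqrt_coeff_0)
  qed
qed

lemma summable_sqrt_coeff: "summable sqrt_coeff"
  by (rule summableI_nonneg_bounded [of _ 1]) (auto simp: sqrt_coeff_nonneg sum_sqrt_coeff_le_1)

lemma suminf_sqrt_coeff_le_1: "suminf sqrt_coeff \<le> 1"
  by (rule suminf_le_const [OF summable_sqrt_coeff]) (simp add: sum_sqrt_coeff_le_1)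

subclass (in complex_hilbert) banach ..

text \<open>Writing a positive \<open>P\<close> as \<open>\<lambda> (1 - A)\<close> with \<open>\<lambda> > \<parallel>P\<parallel>\<close> gives \<open>0 \<le> A \<le> 1\<close>, hence
\<open>\<surd>P = \<surd>\<lambda> (1 - F(A))\<close> with \<open>F(A) = \<Sum> c\<^sub>n A\<^sup>n\<close> norm convergent.\<close>

definition sqrt_scale :: "('a::complex_hilbert \<Rightarrow> 'a) \<Rightarrow> real" where
  "sqrt_scale P = norm (endo_of P) + 1"

definition sqrt_base :: "('a::complex_hilbert \<Rightarrow> 'a) \<Rightarrow> 'a endo" where
  "sqrt_base P = 1 - (1 / sqrt_scale P) *\<^sub>R endo_of P"

definition sqrt_series :: "('a::complex_hilbert \<Rightarrow> 'a) \<Rightarrow> 'a endo" where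
  "sqrt_series P = (\<Sum>k. sqrt_coeff k *\<^sub>R sqrt_base P ^ k)"

definition sqrt_endo :: "('a::complex_hilbert \<Rightarrow> 'a) \<Rightarrow> 'a endo" where
  "sqrt_endo P = sqrt (sqrt_scale P) *\<^sub>R (1 - sqrt_series P)"

context
  fixes P :: "'a::complex_hilbert \<Rightarrow> 'a"
  assumes P: "positive_op P"
begin

lemma endo_apply_endo_of_positive: "endo_apply (endo_of P) = P"
  using P by (simp add: endo_apply_endo_of positive_op_bounded_clinear
      bounded_clinear_imp_bounded_linear)

lemma sqrt_scale_pos: "sqrt_scale P > 0"
  by (simp add: sqrt_scale_def add_nonneg_pos)

lemma sqrt_base_apply: "endo_apply (sqrt_base P) x = x - (1 / sqrt_scale P) *\<^sub>R P x"
  by (simp add: sqrt_base_def endo_apply_simps endo_apply_endo_of_positive)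

lemma endo_clinear_sqrt_base: "endo_clinear (sqrt_base P)"
proof -
  have "endo_clinear (endo_of P)"
    using bounded_clinearD [OF positive_op_bounded_clinear [OF P]]
    by (simp add: endo_clinear_def endo_apply_endo_of_positive)
  then show ?thesis
    unfolding sqrt_base_def by (intro endo_clinear_diff endo_clinear_one endo_clinear_scaleR)
qed

lemma endo_self_adjoint_sqrt_base: "endo_self_adjoint (sqrt_base P)"
proof -
  have "endo_self_adjoint (endo_of P)"
    by (simp add: endo_self_adjoint_def endo_apply_endo_of_positive positive_op_self_adjoint [OF P])
  then show ?thesis
    unfolding sqrt_base_def by (intro endo_self_adjoint_diff endo_self_adjoint_one endo_self_adjoint_scaleR)
qed

lemma sqrt_base_form_bounds:
  "0 \<le> Re (cinner x (endo_apply (sqrt_base P) x))"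
  "Re (cinner x (endo_apply (sqrt_base P) x)) \<le> (norm x)\<^sup>2"
proof -
  have e: "Re (cinner x (endo_apply (sqrt_base P) x))
      = (norm x)\<^sup>2 - (1 / sqrt_scale P) * Re (cinner x (P x))"
    by (simp add: sqrt_base_apply cinner_diff_right cinner_scaleR_right cinner_self_Re)
  have "Re (cinner x (P x)) \<le> norm x * norm (P x)"
    using complex_Re_le_cmod cinner_Cauchy_Schwarz order_trans by blast
  also have "\<dots> \<le> norm x * (norm (endo_of P) * norm x)"
    using norm_endo_apply [of "endo_of P" x] by (simp add: endo_apply_endo_of_positive mult_left_mono)
  also have "\<dots> \<le> sqrt_scale P * (norm x)\<^sup>2"
    by (simp add: sqrt_scale_def power2_eq_square algebra_simps)
  finally have "(1 / sqrt_scale P) * Re (cinner x (P x)) \<le> (norm x)\<^sup>2"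
    using sqrt_scale_pos by (simp add: field_simps)
  then show "0 \<le> Re (cinner x (endo_apply (sqrt_base P) x))"
    using e by linarith
  have "0 \<le> (1 / sqrt_scale P) * Re (cinner x (P x))"
    using P sqrt_scale_pos by (simp add: positive_op_def)
  then show "Re (cinner x (endo_apply (sqrt_base P) x)) \<le> (norm x)\<^sup>2"
    using e by linarith
qed

lemma positive_op_sqrt_base: "positive_op (endo_apply (sqrt_base P))"
  unfolding positive_op_def
proof (intro conjI allI)
  show "bounded_clinear (endo_apply (sqrt_base P))"
    using endo_clinear_sqrt_base
    by (intro bounded_clinearI bounded_linear_endo_apply) (simp add: endo_clinear_def)
qed (simp_all add: Im_cinner_self_adjoint [OF endo_self_adjoint_sqrt_base] sqrt_base_form_bounds(1))

lemma norm_sqrt_base_le_1: "norm (sqrt_base P) \<le> 1"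
proof (cases "norm (sqrt_base P) = 0")
  case False
  define M where "M = norm (sqrt_base P)"
  have M: "M > 0"
    using False by (simp add: M_def)
  \<comment> \<open>\<open>\<parallel>A x\<parallel>\<^sup>2 \<le> \<parallel>A\<parallel> \<langle>x, A x\<rangle> \<le> \<parallel>A\<parallel> \<parallel>x\<parallel>\<^sup>2\<close>, so \<open>\<parallel>A\<parallel> \<le> \<surd>\<parallel>A\<parallel>\<close>\<close>
  have "norm (endo_apply (sqrt_base P) x) \<le> sqrt M * norm x" for x
  proof -
    have "(norm (endo_apply (sqrt_base P) x))\<^sup>2 \<le> M * Re (cinner x (endo_apply (sqrt_base P) x))"
      using norm_sq_le_positive_form [OF positive_op_sqrt_base _ M] norm_endo_apply
      unfolding M_def by blast
    also have "\<dots> \<le> (sqrt M * norm x)\<^sup>2"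
      using sqrt_base_form_bounds(2) M by (simp add: mult_left_mono power_mult_distrib)
    finally show ?thesis
      by (rule power2_le_imp_le) (use M in auto)
  qed
  then have "M \<le> sqrt M"
    unfolding M_def by (intro norm_endo_le) auto
  then have "M * M \<le> sqrt M * sqrt M"
    using M by (intro mult_mono) auto
  then show ?thesis
    using M by (simp add: M_def)
qed simp

lemma summable_norm_sqrt_terms: "summable (\<lambda>k. norm (sqrt_coeff k *\<^sub>R sqrt_base P ^ k))"
proof (rule summable_comparison_test [OF _ summable_sqrt_coeff])
  have "norm (sqrt_coeff n *\<^sub>R sqrt_base P ^ n) \<le> sqrt_coeff n" for n
    using mult_left_mono [OF norm_power_endo_le_1 [OF norm_sqrt_base_le_1] sqrt_coeff_nonneg]
    by (simp add: sqrt_coeff_nonneg)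
  then show "\<exists>N. \<forall>n\<ge>N. norm (norm (sqrt_coeff n *\<^sub>R sqrt_base P ^ n)) \<le> sqrt_coeff n"
    by simp
qed

lemma summable_sqrt_terms: "summable (\<lambda>k. sqrt_coeff k *\<^sub>R sqrt_base P ^ k)"
  using summable_norm_cancel [OF summable_norm_sqrt_terms] .

lemma sqrt_series_square: "sqrt_series P * sqrt_series P = 2 *\<^sub>R sqrt_series P - sqrt_base P"
proof -
  let ?A = "sqrt_base P"
  let ?a = "\<lambda>k. sqrt_coeff k *\<^sub>R ?A ^ k"
  let ?b = "\<lambda>n. (2 * sqrt_coeff n - (if n = 1 then 1 else 0)) *\<^sub>R ?A ^ n"
  have "(\<lambda>n. \<Sum>i\<le>n. ?a i * ?a (n - i)) sums (sqrt_series P * sqrt_series P)"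
    unfolding sqrt_series_def
    by (rule Cauchy_product_sums [OF summable_norm_sqrt_terms summable_norm_sqrt_terms])
  moreover have "(\<Sum>i\<le>n. ?a i * ?a (n - i)) = ?b n" for n
  proof -
    have "(\<Sum>i\<le>n. ?a i * ?a (n - i)) = (\<Sum>i\<le>n. (sqrt_coeff i * sqrt_coeff (n - i)) *\<^sub>R ?A ^ n)"
      by (intro sum.cong) (auto simp flip: power_add)
    then show ?thesis
      by (simp add: scaleR_sum_left [symmetric] sqrt_coeff_convolution)
  qed
  ultimately have "?b sums (sqrt_series P * sqrt_series P)"
    by simp
  moreover have "(\<lambda>n. 2 *\<^sub>R ?a n - (if n = 1 then ?A ^ n else 0)) sums (2 *\<^sub>R sqrt_series P - ?A ^ 1)"
    unfolding sqrt_series_def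
    by (intro sums_diff sums_scaleR_right summable_sums [OF summable_sqrt_terms] sums_single)
  moreover have "(\<lambda>n. 2 *\<^sub>R ?a n - (if n = 1 then ?A ^ n else 0)) = ?b"
    by (auto simp: algebra_simps)
  ultimately show ?thesis
    using sums_unique2 by force
qed

lemma sqrt_endo_square: "sqrt_endo P * sqrt_endo P = endo_of P"
proof -
  have "sqrt_endo P * sqrt_endo P
      = sqrt_scale P *\<^sub>R (1 - 2 *\<^sub>R sqrt_series P + sqrt_series P * sqrt_series P)"
    using sqrt_scale_pos by (simp add: sqrt_endo_def algebra_simps scaleR_2)
  also have "\<dots> = endo_of P"
    using sqrt_scale_pos by (simp add: sqrt_series_square sqrt_base_def)
  finally show ?thesis .
qed

lemma sqrt_series_form:
  "Im (cinner x (endo_apply (sqrt_series P) x)) = 0"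
  "Re (cinner x (endo_apply (sqrt_series P) x)) \<le> (norm x)\<^sup>2"
proof -
  let ?a = "\<lambda>k. sqrt_coeff k *\<^sub>R sqrt_base P ^ k"
  let ?c = "\<lambda>k. cinner x (endo_apply (?a k) x)"
  have sums: "?c sums cinner x (endo_apply (sqrt_series P) x)"
    unfolding sqrt_series_def
    by (rule bounded_linear.sums [OF bounded_linear_cinner_endo_apply summable_sums [OF summable_sqrt_terms]])
  have c_eq: "?c k = complex_of_real (sqrt_coeff k) * cinner x (endo_apply (sqrt_base P ^ k) x)" for k
    by (simp add: endo_apply_simps cinner_scaleR_right)
  have "Im (?c k) = 0" for k
    by (simp add: c_eq Im_cinner_self_adjoint [OF endo_self_adjoint_power [OF endo_self_adjoint_sqrt_base]])
  then have "(\<lambda>k. 0) sums Im (cinner x (endo_apply (sqrt_series P) x))"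
    using bounded_linear.sums [OF bounded_linear_Im sums] by simp
  then show "Im (cinner x (endo_apply (sqrt_series P) x)) = 0"
    using sums_unique2 sums_zero by blast
  have "Re (?c k) \<le> sqrt_coeff k * (norm x)\<^sup>2" for k
  proof -
    have "Re (cinner x (endo_apply (sqrt_base P ^ k) x)) \<le> norm x * norm (endo_apply (sqrt_base P ^ k) x)"
      using complex_Re_le_cmod cinner_Cauchy_Schwarz order_trans by blast
    also have "\<dots> \<le> norm x * (norm (sqrt_base P ^ k) * norm x)"
      by (simp add: mult_left_mono norm_endo_apply)
    also have "\<dots> \<le> norm x * (1 * norm x)"
      using norm_power_endo_le_1 [OF norm_sqrt_base_le_1, of k]
      by (intro mult_left_mono mult_right_mono) auto
    also have "\<dots> = (norm x)\<^sup>2"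
      by (simp add: power2_eq_square)
    finally show ?thesis
      by (simp add: c_eq sqrt_coeff_nonneg mult_left_mono)
  qed
  then have "Re (cinner x (endo_apply (sqrt_series P) x)) \<le> suminf sqrt_coeff * (norm x)\<^sup>2"
    by (rule sums_le [OF _ bounded_linear.sums [OF bounded_linear_Re sums]
          sums_mult2 [OF summable_sums [OF summable_sqrt_coeff]]])
  also have "\<dots> \<le> (norm x)\<^sup>2"
    using mult_right_mono [OF suminf_sqrt_coeff_le_1, of "(norm x)\<^sup>2"] by simp
  finally show "Re (cinner x (endo_apply (sqrt_series P) x)) \<le> (norm x)\<^sup>2" .
qed

lemma positive_op_sqrt_endo: "positive_op (endo_apply (sqrt_endo P))"
  unfolding positive_op_def
proof (intro conjI allI)
  have "endo_clinear (sqrt_endo P)"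
    unfolding sqrt_endo_def sqrt_series_def
    by (intro endo_clinear_scaleR endo_clinear_diff endo_clinear_one endo_clinear_power
        endo_clinear_suminf [OF summable_sqrt_terms] endo_clinear_sqrt_base)
  then show "bounded_clinear (endo_apply (sqrt_endo P))"
    by (intro bounded_clinearI bounded_linear_endo_apply) (simp add: endo_clinear_def)
  fix x
  have e: "cinner x (endo_apply (sqrt_endo P) x)
      = complex_of_real (sqrt (sqrt_scale P)) * (cinner x x - cinner x (endo_apply (sqrt_series P) x))"
    by (simp add: sqrt_endo_def endo_apply_simps cinner_scaleR_right cinner_diff_right)
  show "Im (cinner x (endo_apply (sqrt_endo P) x)) = 0"
    using sqrt_series_form by (simp add: e cinner_self_Im)
  show "0 \<le> Re (cinner x (endo_apply (sqrt_endo P) x))"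
    using sqrt_series_form sqrt_scale_pos by (simp add: e cinner_self_Re)
qed

lemma sqrt_endo_commute:
  assumes "X * endo_of P = endo_of P * X"
  shows "X * sqrt_endo P = sqrt_endo P * X"
proof -
  have "X * sqrt_base P = sqrt_base P * X"
    using assms by (simp add: sqrt_base_def algebra_simps)
  then have XA: "X * sqrt_base P ^ k = sqrt_base P ^ k * X" for k
    by (metis power_commuting_commutes)
  have "X * sqrt_series P = (\<Sum>k. X * (sqrt_coeff k *\<^sub>R sqrt_base P ^ k))"
    unfolding sqrt_series_def by (rule suminf_mult [OF summable_sqrt_terms, symmetric])
  also have "\<dots> = (\<Sum>k. (sqrt_coeff k *\<^sub>R sqrt_base P ^ k) * X)"
    by (simp add: XA)
  also have "\<dots> = sqrt_series P * X"
    unfolding sqrt_series_def by (rule suminf_mult2 [OF summable_sqrt_terms, symmetric])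
  finally show ?thesis
    by (simp add: sqrt_endo_def algebra_simps)
qed

lemma sqrt_endo_unique:
  assumes S: "positive_op S" and SS: "S \<circ> S = P"
  shows "S = endo_apply (sqrt_endo P)"
proof -
  define X where "X = endo_of S"
  have X: "endo_apply X = S"
    unfolding X_def
    by (rule endo_apply_endo_of [OF bounded_clinear_imp_bounded_linear [OF positive_op_bounded_clinear [OF S]]])
  have XX: "X * X = endo_of P"
    by (rule endo_eqI) (use SS in \<open>auto simp: endo_apply_simps X endo_apply_endo_of_positive\<close>)
  have "X = sqrt_endo P"
  proof (rule positive_endo_square_unique)
    show "positive_op (endo_apply X)"
      using S by (simp add: X)
    show "X * sqrt_endo P = sqrt_endo P * X"
      using XX by (intro sqrt_endo_commute) (metis mult.assoc)
  qed (use positive_op_sqrt_endo XX sqrt_endo_square in auto)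
  then show ?thesis
    using X by simp
qed

lemma op_sqrt_eq_sqrt_endo: "op_sqrt P = endo_apply (sqrt_endo P)"
  unfolding op_sqrt_def
proof (rule the_equality)
  show "positive_op (endo_apply (sqrt_endo P)) \<and> endo_apply (sqrt_endo P) \<circ> endo_apply (sqrt_endo P) = P"
    using positive_op_sqrt_endo sqrt_endo_square
    by (auto simp: fun_eq_iff endo_apply_endo_of_positive simp flip: endo_apply_simps(3))
qed (use sqrt_endo_unique in blast)

end

lemma positive_op_sqrt:
  assumes "positive_op P"
  shows "positive_op (op_sqrt P)" "op_sqrt P \<circ> op_sqrt P = P"
  using op_sqrt_eq_sqrt_endo [OF assms] positive_op_sqrt_endo [OF assms] apply simp
  using op_sqrt_eq_sqrt_endo [OF assms] sqrt_endo_square [OF assms]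
  by (auto simp: fun_eq_iff endo_apply_endo_of_positive [OF assms] simp flip: endo_apply_simps(3))

lemma op_sqrt_unique:
  assumes S: "positive_op S" and SS: "S \<circ> S = P"
  shows "op_sqrt P = S"
proof -
  have S_bc: "bounded_clinear S"
    using S by (rule positive_op_bounded_clinear)
  have "cinner x (P x) = cinner (S x) (S x)" for x
    using SS positive_op_self_adjoint [OF S] by auto
  then have "positive_op P"
    using bounded_clinear_compose [OF S_bc S_bc] SS unfolding positive_op_def
    by (simp add: cinner_self_norm)
  then show ?thesis
    using op_sqrt_eq_sqrt_endo sqrt_endo_unique assms by metis
qed

section \<open>Absolute values\<close>

lemma positive_op_adjoint_comp:
  fixes T :: "'a::complex_hilbert \<Rightarrow> 'b::complex_hilbert"
  assumes "bounded_clinear T"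
  shows "positive_op (adjoint T \<circ> T)"
  unfolding positive_op_def
proof (intro conjI allI)
  show "bounded_clinear (adjoint T \<circ> T)"
    by (rule bounded_clinear_compose [OF bounded_clinear_adjoint [OF assms] assms])
  fix x
  have "cinner x ((adjoint T \<circ> T) x) = cinner (T x) (T x)"
    by (simp add: cinner_adjoint [OF assms])
  then show "Im (cinner x ((adjoint T \<circ> T) x)) = 0" "0 \<le> Re (cinner x ((adjoint T \<circ> T) x))"
    by (simp_all add: cinner_self_norm)
qed

lemma positive_op_abs:
  fixes T :: "'a::complex_hilbert \<Rightarrow> 'b::complex_hilbert"
  assumes "bounded_clinear T"
  shows "positive_op (op_abs T)" "op_abs T \<circ> op_abs T = adjoint T \<circ> T"
  unfolding op_abs_def using positive_op_sqrt [OF positive_op_adjoint_comp [OF assms]] by auto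

lemma norm_op_abs:
  fixes T :: "'a::complex_hilbert \<Rightarrow> 'b::complex_hilbert"
  assumes "bounded_clinear T"
  shows "norm (op_abs T x) = norm (T x)"
proof -
  have "(norm (op_abs T x))\<^sup>2 = Re (cinner x (op_abs T (op_abs T x)))"
    by (simp add: cinner_self_Re [symmetric] positive_op_self_adjoint [OF positive_op_abs(1) [OF assms]])
  also have "\<dots> = (norm (T x))\<^sup>2"
    using positive_op_abs(2) [OF assms]
    by (metis comp_apply cinner_adjoint [OF assms] cinner_self_Re)
  finally show ?thesis
    by (simp add: power2_eq_iff_nonneg)
qed

lemma positive_op_unitary_conj:
  assumes S: "positive_op S" and U: "unitary U"
  shows "positive_op (adjoint U \<circ> S \<circ> U)"
  unfolding positive_op_def
proof (intro conjI allI)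
  have U_bc: "bounded_clinear U"
    using U by (simp add: unitary_def)
  then show "bounded_clinear (adjoint U \<circ> S \<circ> U)"
    by (intro bounded_clinear_compose bounded_clinear_adjoint positive_op_bounded_clinear [OF S])
  fix x
  have "cinner x ((adjoint U \<circ> S \<circ> U) x) = cinner (U x) (S (U x))"
    by (simp add: cinner_adjoint [OF U_bc, symmetric])
  then show "Im (cinner x ((adjoint U \<circ> S \<circ> U) x)) = 0" "0 \<le> Re (cinner x ((adjoint U \<circ> S \<circ> U) x))"
    using S by (simp_all add: positive_op_def)
qed

lemma op_abs_unitary_conj_iff:
  fixes T1 :: "'a::complex_hilbert \<Rightarrow> 'a" and T2 :: "'b::complex_hilbert \<Rightarrow> 'b" and U :: "'a \<Rightarrow> 'b"
  assumes T1: "bounded_clinear T1" and T2: "bounded_clinear T2" and U: "unitary U"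
  shows "op_abs T1 = adjoint U \<circ> op_abs T2 \<circ> U \<longleftrightarrow> (\<forall>x. norm (T1 x) = norm (T2 (U x)))"
proof
  assume "op_abs T1 = adjoint U \<circ> op_abs T2 \<circ> U"
  then show "\<forall>x. norm (T1 x) = norm (T2 (U x))"
    by (metis comp_apply norm_op_abs [OF T1] norm_op_abs [OF T2] norm_adjoint_unitary [OF U])
next
  assume norm_eq: "\<forall>x. norm (T1 x) = norm (T2 (U x))"
  have U_bc: "bounded_clinear U"
    using U by (simp add: unitary_def)
  have cinner_eq: "cinner (T1 y) (T1 x) = cinner (T2 (U y)) (T2 (U x))" for x y
    using cinner_eq_if_norm_eq [of T1 "T2 \<circ> U"] norm_eq
      bounded_clinearD [OF T1] bounded_clinearD [OF T2] bounded_clinearD [OF U_bc]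
    by simp
  have "(adjoint U \<circ> op_abs T2 \<circ> U) \<circ> (adjoint U \<circ> op_abs T2 \<circ> U) = adjoint T1 \<circ> T1"
  proof
    fix x
    have "op_abs T2 (op_abs T2 (U x)) = adjoint T2 (T2 (U x))"
      using positive_op_abs(2) [OF T2] by (metis comp_apply)
    moreover have "adjoint U (adjoint T2 (T2 (U x))) = adjoint T1 (T1 x)"
      by (rule cinner_eqI) (simp add: cinner_adjoint [OF U_bc, symmetric]
          cinner_adjoint [OF T2, symmetric] cinner_adjoint [OF T1, symmetric] cinner_eq)
    ultimately show "((adjoint U \<circ> op_abs T2 \<circ> U) \<circ> (adjoint U \<circ> op_abs T2 \<circ> U)) x = (adjoint T1 \<circ> T1) x"
      by (simp add: unitary_apply_adjoint [OF U])
  qed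
  then have "op_sqrt (adjoint T1 \<circ> T1) = adjoint U \<circ> op_abs T2 \<circ> U"
    by (rule op_sqrt_unique [OF positive_op_unitary_conj [OF positive_op_abs(1) [OF T2] U]])
  then show "op_abs T1 = adjoint U \<circ> op_abs T2 \<circ> U"
    by (simp add: op_abs_def [of T1])
qed

section \<open>Extending isometries from dense ranges\<close>

lemma continuous_eq_on_dense:
  fixes p q :: "'a::real_normed_vector \<Rightarrow> 'b::real_normed_vector"
  assumes "continuous_on UNIV p" "continuous_on UNIV q" "\<And>y. y \<in> X \<Longrightarrow> p y = q y"
    and "closure X = UNIV"
  shows "p y = q y"
proof -
  have "closure X \<subseteq> {x. p x = q x}"
    using assms(3) closed_Collect_eq [OF assms(1,2)] by (intro closure_minimal) auto
  then show ?thesis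
    using assms(4) by auto
qed

lemma dense_range_compose:
  fixes f :: "'a::real_normed_vector \<Rightarrow> 'b::real_normed_vector"
  assumes "continuous_on UNIV f" "closure (range f) = UNIV" "closure (range g) = UNIV"
  shows "closure (range (f \<circ> g)) = UNIV"
proof -
  have "range f \<subseteq> closure (range (f \<circ> g))"
    using continuous_image_closure_subset [OF assms(1), of "range g"] assms(3)
    by (simp add: image_comp)
  then show ?thesis
    using assms(2) by (metis closure_closure closure_mono top.extremum_uniqueI)
qed

lemma continuous_extension_from_dense_range:
  fixes A :: "'c::complex_hilbert \<Rightarrow> 'a::complex_hilbert" and B :: "'c \<Rightarrow> 'b::complex_hilbert"
  assumes A: "bounded_clinear A" and B: "bounded_clinear B"
    and dense: "closure (range A) = UNIV" and norm_eq: "\<And>x. norm (A x) = norm (B x)"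
  obtains g where "continuous_on UNIV g" "\<And>x. g (A x) = B x"
proof -
  define f where "f y = B (inv A y)" for y
  have f_A: "f (A x) = B x" for x
  proof -
    have "norm (B (inv A (A x) - x)) = 0"
      using norm_eq [of "inv A (A x) - x"]
      by (simp add: bounded_clinear_diff [OF A] bounded_clinear_diff [OF B] f_inv_into_f [OF rangeI])
    then show ?thesis
      by (simp add: f_def bounded_clinear_diff [OF B])
  qed
  have "uniformly_continuous_on (range A) f"
    unfolding uniformly_continuous_on_def
    by (auto simp: f_A dist_norm norm_eq bounded_clinear_diff [OF A, symmetric]
        bounded_clinear_diff [OF B, symmetric] intro!: exI)
  then obtain g where g: "uniformly_continuous_on (closure (range A)) g"
    and g_f: "\<And>y. y \<in> range A \<Longrightarrow> f y = g y"
    by (rule uniformly_continuous_on_extension_on_closure) blast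
  show ?thesis
  proof (rule that)
    show "continuous_on UNIV g"
      using g dense by (simp add: uniformly_continuous_imp_continuous)
    show "g (A x) = B x" for x
      using g_f [of "A x"] f_A by simp
  qed
qed

lemma isometric_extension:
  fixes A :: "'c::complex_hilbert \<Rightarrow> 'a::complex_hilbert" and B :: "'c \<Rightarrow> 'b::complex_hilbert"
  assumes A: "bounded_clinear A" and B: "bounded_clinear B"
    and dense: "closure (range A) = UNIV" and norm_eq: "\<And>x. norm (A x) = norm (B x)"
  obtains g where "bounded_clinear g" "\<And>y. norm (g y) = norm y" "\<And>x. g (A x) = B x"
proof -
  obtain g where cont: "continuous_on UNIV g" and g_A: "\<And>x. g (A x) = B x"
    using continuous_extension_from_dense_range [OF A B dense norm_eq] by blast
  have "norm (g y) = norm y" for y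
    by (rule continuous_eq_on_dense [of "\<lambda>y. norm (g y)" norm "range A", OF _ _ _ dense])
      (auto intro!: continuous_intros cont simp: g_A norm_eq)
  moreover have "g (a + y) = g a + g y" for a y
  proof (rule continuous_eq_on_dense [of "\<lambda>y. g (a + y)" _ "range A", OF _ _ _ dense])
    show "continuous_on UNIV (\<lambda>y. g (a + y))" for a
      by (rule continuous_on_compose2 [OF cont]) (auto intro!: continuous_intros)
    show "continuous_on UNIV (\<lambda>y. g a + g y)" for a
      by (intro continuous_intros cont)
    have "g (a + A x) = g a + g (A x)" for a x
    proof (rule continuous_eq_on_dense [of "\<lambda>a. g (a + A x)" _ "range A", OF _ _ _ dense])
      show "continuous_on UNIV (\<lambda>a. g (a + A x))"
        by (rule continuous_on_compose2 [OF cont]) (auto intro!: continuous_intros)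
      show "continuous_on UNIV (\<lambda>a. g a + g (A x))"
        by (intro continuous_intros cont)
    qed (auto simp: g_A bounded_clinearD [OF A, symmetric] bounded_clinearD [OF B])
    then show "y \<in> range A \<Longrightarrow> g (a + y) = g a + g y" for y
      by blast
  qed
  moreover have "g (c *\<^sub>C y) = c *\<^sub>C g y" for c y
  proof (rule continuous_eq_on_dense [of "\<lambda>y. g (c *\<^sub>C y)" _ "range A", OF _ _ _ dense])
    show "continuous_on UNIV (\<lambda>y. g (c *\<^sub>C y))"
      by (rule continuous_on_compose2 [OF cont]) (auto intro!: linear_continuous_on bounded_linear_scaleC)
    show "continuous_on UNIV (\<lambda>y. c *\<^sub>C g y)"
      by (rule continuous_on_compose2 [OF linear_continuous_on [OF bounded_linear_scaleC] cont]) auto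
  qed (auto simp: g_A bounded_clinearD [OF A, symmetric] bounded_clinearD [OF B])
  ultimately show ?thesis
    using that g_A unfolding bounded_clinear_def by (metis mult_1_right order_refl)
qed

lemma unitary_extension:
  fixes A :: "'c::complex_hilbert \<Rightarrow> 'a::complex_hilbert" and B :: "'c \<Rightarrow> 'b::complex_hilbert"
  assumes A: "bounded_clinear A" and B: "bounded_clinear B"
    and dense_A: "closure (range A) = UNIV" and dense_B: "closure (range B) = UNIV"
    and norm_eq: "\<And>x. norm (A x) = norm (B x)"
  obtains U where "unitary U" "\<And>x. U (A x) = B x"
proof -
  obtain g where g: "bounded_clinear g" "\<And>y. norm (g y) = norm y" "\<And>x. g (A x) = B x"
    using isometric_extension [OF A B dense_A norm_eq] by blast
  have "complete (range g)"
    using g(1,2) by (intro complete_isometric_image [of 1 UNIV])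
      (auto simp: complete_UNIV bounded_clinear_imp_bounded_linear)
  then have "closure (range B) \<subseteq> range g"
    using g(3) by (intro closure_minimal complete_imp_closed) (auto simp flip: g(3))
  then have "surj g"
    using dense_B by auto
  then show ?thesis
    using that g unfolding unitary_def by blast
qed

section \<open>Weighted shifts on \<open>\<ell>\<^sup>2\<close>\<close>

definition single :: "nat \<Rightarrow> 'a::complex_hilbert \<Rightarrow> nat \<Rightarrow> 'a" where
  "single k x = (\<lambda>n. if n = k then x else 0)"

lemma single_norm_sums: "(\<lambda>n. (norm (single k x n))\<^sup>2) sums (norm x)\<^sup>2"
proof -
  have "(\<lambda>n. (norm (single k x n))\<^sup>2) = (\<lambda>n. if n = k then (norm x)\<^sup>2 else 0)"
    by (auto simp: single_def)
  then show ?thesis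
    using sums_single [of k "\<lambda>_. (norm x)\<^sup>2"] by simp
qed

lemma single_l2seq: "single k x \<in> l2seq"
  unfolding l2seq_def using sums_summable [OF single_norm_sums] by simp

lemma l2norm_single: "l2norm (single k x) = norm x"
  by (simp add: l2norm_def sums_unique [OF single_norm_sums, symmetric])

lemma l2norm_sums:
  assumes "h \<in> l2seq"
  shows "(\<lambda>n. (norm (h n))\<^sup>2) sums (l2norm h)\<^sup>2"
proof -
  have summable: "summable (\<lambda>n. (norm (h n))\<^sup>2)"
    using assms by (simp add: l2seq_def)
  have "0 \<le> (\<Sum>n. (norm (h n))\<^sup>2)"
    by (rule suminf_nonneg [OF summable]) simp
  then show ?thesis
    using summable_sums [OF summable] by (simp add: l2norm_def)
qed

lemma l2norm_nonneg: "h \<in> l2seq \<Longrightarrow> 0 \<le> l2norm h"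
  by (simp add: l2norm_def l2seq_def suminf_nonneg)

lemma l2seq_add:
  assumes "h \<in> l2seq" "g \<in> l2seq"
  shows "(\<lambda>n. h n + g n) \<in> l2seq"
proof -
  have bound: "norm ((norm (h n + g n))\<^sup>2) \<le> 2 * (norm (h n))\<^sup>2 + 2 * (norm (g n))\<^sup>2" for n
  proof -
    have "(norm (h n + g n))\<^sup>2 \<le> (norm (h n) + norm (g n))\<^sup>2"
      by (simp add: norm_triangle_ineq power_mono)
    also have "\<dots> \<le> 2 * (norm (h n))\<^sup>2 + 2 * (norm (g n))\<^sup>2"
      by (smt (verit) sum_squares_bound zero_le_power2 power2_sum)
    finally show ?thesis
      by simp
  qed
  have "summable (\<lambda>n. 2 * (norm (h n))\<^sup>2 + 2 * (norm (g n))\<^sup>2)"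
    using assms by (auto simp: l2seq_def intro!: summable_add summable_mult)
  then show ?thesis
    unfolding l2seq_def mem_Collect_eq by (rule summable_comparison_test' [where N = 0]) (rule bound)
qed

lemma wshift_l2seq:
  assumes sw: "shift_weights_dense W" and h: "h \<in> l2seq"
  shows "wshift W h \<in> l2seq"
proof -
  obtain C where C: "\<And>n x. norm (W n x) \<le> C * norm x"
    using sw by (auto simp: shift_weights_dense_def)
  have bound: "norm ((norm (W n (h n)))\<^sup>2) \<le> C\<^sup>2 * (norm (h n))\<^sup>2" for n
    using power_mono [OF C [of n "h n"]] by (simp add: power_mult_distrib)
  have "summable (\<lambda>n. C\<^sup>2 * (norm (h n))\<^sup>2)"
    using h by (auto simp: l2seq_def intro: summable_mult)
  then have "summable (\<lambda>n. (norm (W n (h n)))\<^sup>2)"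
    by (rule summable_comparison_test' [where N = 0]) (rule bound)
  then show ?thesis
    unfolding l2seq_def by (subst summable_Suc_iff [symmetric]) (simp add: wshift_def)
qed

lemma shift_weights_bounded_clinear: "shift_weights_dense W \<Longrightarrow> bounded_clinear (W n)"
  by (simp add: shift_weights_dense_def)

lemma wshift_single:
  assumes "shift_weights_dense W"
  shows "wshift W (single k y) = single (Suc k) (W k y)"
  by (auto simp: wshift_def single_def fun_eq_iff split: nat.split
      intro: bounded_clinear_zero [OF shift_weights_bounded_clinear [OF assms]])

lemma bounded_clinear_wprod:
  assumes "shift_weights_dense W"
  shows "bounded_clinear (wprod W i)"
proof (induction i)
  case 0
  show ?case
    by (simp only: wprod.simps bounded_clinear_id)
next
  case (Suc i)
  show ?case
    unfolding wprod.simps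
    by (rule bounded_clinear_compose [OF shift_weights_bounded_clinear [OF assms] Suc.IH])
qed

lemma dense_range_wprod:
  assumes "shift_weights_dense W"
  shows "closure (range (wprod W i)) = UNIV"
proof (induction i)
  case (Suc i)
  have "closure (range (W i)) = UNIV"
    using assms by (simp add: shift_weights_dense_def)
  then show ?case
    using dense_range_compose [OF continuous_on_bounded_clinear [OF shift_weights_bounded_clinear [OF assms]]
        _ Suc.IH] by simp
qed simp

text \<open>\<open>h \<perp> ran W\<close>, stated through norms only (0 is a nearest point of \<open>ran W\<close> to \<open>h\<close>), so that it is
visibly invariant under a unitary of \<open>\<ell>\<^sup>2\<close> intertwining two shifts.\<close>

definition orth_range_wshift :: "(nat \<Rightarrow> 'a::complex_hilbert \<Rightarrow> 'a) \<Rightarrow> (nat \<Rightarrow> 'a) \<Rightarrow> bool" where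
  "orth_range_wshift W h \<longleftrightarrow> (\<forall>g\<in>l2seq. l2norm h \<le> l2norm (\<lambda>n. h n + wshift W g n))"

lemma orth_range_wshift_single_0:
  assumes "shift_weights_dense W"
  shows "orth_range_wshift W (single 0 x)"
  unfolding orth_range_wshift_def
proof
  fix g :: "nat \<Rightarrow> 'a" assume "g \<in> l2seq"
  define q where "q = (\<lambda>n. single 0 x n + wshift W g n)"
  have "summable (\<lambda>n. (norm (q n))\<^sup>2)"
    using l2seq_add [OF single_l2seq wshift_l2seq [OF assms \<open>g \<in> l2seq\<close>]] by (simp add: q_def l2seq_def)
  then have "(\<Sum>n\<in>{0}. (norm (q n))\<^sup>2) \<le> (\<Sum>n. (norm (q n))\<^sup>2)"
    by (rule sum_le_suminf) auto
  moreover have "q 0 = x"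
    by (simp add: q_def wshift_def single_def)
  ultimately have "norm x \<le> l2norm q"
    unfolding l2norm_def by (simp add: real_le_rsqrt)
  then show "l2norm (single 0 x) \<le> l2norm q"
    by (simp add: l2norm_single)
qed

lemma orth_range_wshift_imp_vanishes:
  assumes sw: "shift_weights_dense W" and h: "h \<in> l2seq" and orth: "orth_range_wshift W h"
    and "n > 0"
  shows "h n = 0"
proof (rule ccontr)
  assume "h n \<noteq> 0"
  obtain k where k: "n = Suc k"
    using \<open>n > 0\<close> gr0_implies_Suc by blast
  \<comment> \<open>the dense range of \<open>W\<^sub>k\<close> lets a shifted vector decrease the \<open>n\<close>-th entry of \<open>h\<close>\<close>
  have "- h n \<in> closure (range (W k))"
    using sw by (simp add: shift_weights_dense_def)
  then obtain z where "z \<in> range (W k)" "dist z (- h n) < norm (h n)"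
    using \<open>h n \<noteq> 0\<close> by (meson closure_approachable zero_less_norm_iff)
  then obtain y where y: "norm (h n + W k y) < norm (h n)"
    by (auto simp: dist_norm add.commute)
  define q where "q = (\<lambda>m. h m + wshift W (single k y) m)"
  define d where "d = (norm (h n + W k y))\<^sup>2 - (norm (h n))\<^sup>2"
  have "(\<lambda>m. (norm (h m))\<^sup>2 + (if m = n then d else 0)) sums ((l2norm h)\<^sup>2 + d)"
    using sums_add [OF l2norm_sums [OF h] sums_single [of n "\<lambda>_. d"]] by simp
  moreover have "(\<lambda>m. (norm (h m))\<^sup>2 + (if m = n then d else 0)) = (\<lambda>m. (norm (q m))\<^sup>2)"
    unfolding q_def wshift_single [OF sw] by (auto simp: d_def k single_def)
  moreover have "q \<in> l2seq"
    unfolding q_def by (rule l2seq_add [OF h wshift_l2seq [OF sw single_l2seq]])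
  ultimately have "(l2norm q)\<^sup>2 = (l2norm h)\<^sup>2 + d"
    using l2norm_sums sums_unique2 by metis
  moreover have "d < 0"
    using y by (simp add: d_def power_strict_mono)
  moreover have "l2norm h \<le> l2norm q"
    using orth single_l2seq [of k y] unfolding orth_range_wshift_def q_def by blast
  then have "(l2norm h)\<^sup>2 \<le> (l2norm q)\<^sup>2"
    by (rule power_mono) (rule l2norm_nonneg [OF h])
  ultimately show False
    by linarith
qed

lemma orth_range_wshift_iff:
  assumes "shift_weights_dense W" "h \<in> l2seq"
  shows "orth_range_wshift W h \<longleftrightarrow> h = single 0 (h 0)"
proof
  assume "orth_range_wshift W h"
  then show "h = single 0 (h 0)"
    using orth_range_wshift_imp_vanishes [OF assms] by (auto simp: single_def fun_eq_iff)
qed (metis orth_range_wshift_single_0 [OF assms(1)])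

lemma unitary_l2D:
  assumes "unitary_l2 V"
  shows "\<And>h. h \<in> l2seq \<Longrightarrow> V h \<in> l2seq"
    and "\<And>g. g \<in> l2seq \<Longrightarrow> \<exists>h\<in>l2seq. V h = g"
    and "\<And>h g. h \<in> l2seq \<Longrightarrow> g \<in> l2seq \<Longrightarrow> V (\<lambda>n. h n + g n) = (\<lambda>n. V h n + V g n)"
    and "\<And>a h. h \<in> l2seq \<Longrightarrow> V (\<lambda>n. a *\<^sub>C h n) = (\<lambda>n. a *\<^sub>C V h n)"
    and "\<And>h. h \<in> l2seq \<Longrightarrow> l2norm (V h) = l2norm h"
  using assms unfolding unitary_l2_def by blast+

lemma intertwining_orth_range_wshift:
  fixes W1 :: "nat \<Rightarrow> 'a::complex_hilbert \<Rightarrow> 'a" and W2 :: "nat \<Rightarrow> 'b::complex_hilbert \<Rightarrow> 'b"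
  assumes sw1: "shift_weights_dense W1" and V: "unitary_l2 V"
    and comm: "\<And>h. h \<in> l2seq \<Longrightarrow> V (wshift W1 h) = wshift W2 (V h)" and h: "h \<in> l2seq"
  shows "orth_range_wshift W2 (V h) \<longleftrightarrow> orth_range_wshift W1 h"
proof -
  have shifted: "l2norm (\<lambda>n. V h n + wshift W2 (V g) n) = l2norm (\<lambda>n. h n + wshift W1 g n)"
    if g: "g \<in> l2seq" for g
  proof -
    have w: "wshift W1 g \<in> l2seq"
      by (rule wshift_l2seq [OF sw1 g])
    have "V (\<lambda>n. h n + wshift W1 g n) = (\<lambda>n. V h n + wshift W2 (V g) n)"
      by (simp add: unitary_l2D(3) [OF V h w] comm [OF g])
    then show ?thesis
      using unitary_l2D(5) [OF V l2seq_add [OF h w]] by simp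
  qed
  show ?thesis
    unfolding orth_range_wshift_def
  proof (intro iffI ballI)
    fix g :: "nat \<Rightarrow> 'a" assume "\<forall>g\<in>l2seq. l2norm (V h) \<le> l2norm (\<lambda>n. V h n + wshift W2 g n)"
      and g: "g \<in> l2seq"
    then show "l2norm h \<le> l2norm (\<lambda>n. h n + wshift W1 g n)"
      using unitary_l2D(1) [OF V g] shifted [OF g] unitary_l2D(5) [OF V h] by auto
  next
    fix g :: "nat \<Rightarrow> 'b" assume orth: "\<forall>g\<in>l2seq. l2norm h \<le> l2norm (\<lambda>n. h n + wshift W1 g n)"
      and "g \<in> l2seq"
    then obtain g' where "g' \<in> l2seq" "V g' = g"
      using unitary_l2D(2) [OF V] by blast
    then show "l2norm (V h) \<le> l2norm (\<lambda>n. V h n + wshift W2 g n)"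
      using orth shifted unitary_l2D(5) [OF V h] by auto
  qed
qed

lemma intertwining_degree_0:
  fixes W1 :: "nat \<Rightarrow> 'a::complex_hilbert \<Rightarrow> 'a" and W2 :: "nat \<Rightarrow> 'b::complex_hilbert \<Rightarrow> 'b"
  assumes sw1: "shift_weights_dense W1" and sw2: "shift_weights_dense W2" and V: "unitary_l2 V"
    and comm: "\<And>h. h \<in> l2seq \<Longrightarrow> V (wshift W1 h) = wshift W2 (V h)"
  defines "U0 \<equiv> \<lambda>x. V (single 0 x) 0"
  shows "V (single 0 x) = single 0 (U0 x)" and "unitary U0"
proof -
  have V_single: "V (single 0 x) = single 0 (U0 x)" for x
    using orth_range_wshift_iff [OF sw2 unitary_l2D(1) [OF V single_l2seq]]
      intertwining_orth_range_wshift [OF sw1 V comm single_l2seq] orth_range_wshift_single_0 [OF sw1]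
    by (simp add: U0_def)
  then show "V (single 0 x) = single 0 (U0 x)" .
  have "U0 (x + y) = U0 x + U0 y" "U0 (a *\<^sub>C x) = a *\<^sub>C U0 x" for x y a
    using unitary_l2D(3) [OF V single_l2seq single_l2seq, of 0 x 0 y] unitary_l2D(4) [OF V single_l2seq]
    by (simp_all add: U0_def single_def if_distrib cong: if_cong)
  moreover have "norm (U0 x) = norm x" for x
    using unitary_l2D(5) [OF V single_l2seq [of 0 x]] by (simp add: V_single l2norm_single)
  moreover have "y \<in> range U0" for y
  proof -
    obtain h where h: "h \<in> l2seq" "V h = single 0 y"
      using unitary_l2D(2) [OF V single_l2seq] by blast
    then have "h = single 0 (h 0)"
      using intertwining_orth_range_wshift [OF sw1 V comm h(1)] orth_range_wshift_iff [OF sw1 h(1)]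
        orth_range_wshift_single_0 [OF sw2] by simp
    then have "U0 (h 0) = y"
      using V_single [of "h 0"] h(2) by (metis single_def)
    then show ?thesis
      by blast
  qed
  ultimately show "unitary U0"
    unfolding unitary_def bounded_clinear_def by (auto intro!: exI [of _ 1])
qed

lemma unit_equiv_imp_norm_wprod_eq:
  fixes W1 :: "nat \<Rightarrow> 'a::complex_hilbert \<Rightarrow> 'a" and W2 :: "nat \<Rightarrow> 'b::complex_hilbert \<Rightarrow> 'b"
  assumes sw1: "shift_weights_dense W1" and sw2: "shift_weights_dense W2"
    and "unit_equiv_l2 (wshift W1) (wshift W2)"
  obtains U0 where "unitary U0" "\<And>i x. norm (wprod W1 i x) = norm (wprod W2 i (U0 x))"
proof -
  obtain V where V: "unitary_l2 V" and comm: "\<And>h. h \<in> l2seq \<Longrightarrow> V (wshift W1 h) = wshift W2 (V h)"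
    using assms(3) unfolding unit_equiv_l2_def by blast
  define U0 where "U0 x = V (single 0 x) 0" for x
  note degree_0 = intertwining_degree_0 [OF sw1 sw2 V comm, folded U0_def]
  have V_single: "V (single n (wprod W1 n x)) = single n (wprod W2 n (U0 x))" for n x
  proof (induction n)
    case (Suc n)
    have "V (single (Suc n) (wprod W1 (Suc n) x)) = V (wshift W1 (single n (wprod W1 n x)))"
      by (simp add: wshift_single [OF sw1])
    also have "\<dots> = single (Suc n) (wprod W2 (Suc n) (U0 x))"
      by (simp add: comm [OF single_l2seq] Suc wshift_single [OF sw2])
    finally show ?case .
  qed (simp add: degree_0(1))
  show ?thesis
    using that [OF degree_0(2)] unitary_l2D(5) [OF V single_l2seq]
    by (metis V_single l2norm_single)
qed

lemma unitary_intertwining_wprod: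
  fixes W1 :: "nat \<Rightarrow> 'a::complex_hilbert \<Rightarrow> 'a" and W2 :: "nat \<Rightarrow> 'b::complex_hilbert \<Rightarrow> 'b"
  assumes sw1: "shift_weights_dense W1" and sw2: "shift_weights_dense W2"
    and U0: "unitary U0" and norm_eq: "\<And>x. norm (wprod W1 i x) = norm (wprod W2 i (U0 x))"
  shows "\<exists>U. unitary U \<and> (\<forall>x. U (wprod W1 i x) = wprod W2 i (U0 x))"
proof -
  have U0_bc: "bounded_clinear U0" and "surj U0"
    using U0 by (simp_all add: unitary_def)
  have "range (wprod W2 i \<circ> U0) = wprod W2 i ` range U0"
    by (rule image_comp [symmetric])
  then have "closure (range (wprod W2 i \<circ> U0)) = UNIV"
    using \<open>surj U0\<close> dense_range_wprod [OF sw2] by simp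
  then obtain U where "unitary U" "\<And>x. U (wprod W1 i x) = (wprod W2 i \<circ> U0) x"
    using unitary_extension [OF bounded_clinear_wprod [OF sw1]
        bounded_clinear_compose [OF bounded_clinear_wprod [OF sw2] U0_bc] dense_range_wprod [OF sw1]]
      norm_eq by (metis comp_apply)
  then show ?thesis
    by auto
qed

lemma intertwining_unitaries:
  fixes W1 :: "nat \<Rightarrow> 'a::complex_hilbert \<Rightarrow> 'a" and W2 :: "nat \<Rightarrow> 'b::complex_hilbert \<Rightarrow> 'b"
  assumes sw1: "shift_weights_dense W1" and sw2: "shift_weights_dense W2"
    and U0: "unitary U0" and norm_eq: "\<And>i x. norm (wprod W1 i x) = norm (wprod W2 i (U0 x))"
  obtains U where "\<And>i. unitary (U i)" "\<And>m y. U (Suc m) (W1 m y) = W2 m (U m y)"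
proof -
  have "\<exists>U. unitary U \<and> (\<forall>x. U (wprod W1 i x) = wprod W2 i (U0 x))" for i
    by (rule unitary_intertwining_wprod [OF sw1 sw2 U0 norm_eq])
  then obtain U where U: "\<And>i. unitary (U i)" "\<And>i x. U i (wprod W1 i x) = wprod W2 i (U0 x)"
    by metis
  \<comment> \<open>\<open>U\<^sub>m\<^sub>+\<^sub>1 W\<^sup>(\<^sup>1\<^sup>)\<^sub>m = W\<^sup>(\<^sup>2\<^sup>)\<^sub>m U\<^sub>m\<close> holds on the dense range of \<open>W\<^sup>(\<^sup>1\<^sup>)\<^sub>[\<^sub>m\<^sub>]\<close>\<close>
  have "(U (Suc m) \<circ> W1 m) y = (W2 m \<circ> U m) y" for m y
  proof (rule continuous_eq_on_dense [of _ _ "range (wprod W1 m)", OF _ _ _ dense_range_wprod [OF sw1]])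
    have "bounded_clinear (U m)" "bounded_clinear (U (Suc m))"
      using U(1) by (simp_all add: unitary_def)
    then show "continuous_on UNIV (U (Suc m) \<circ> W1 m)" "continuous_on UNIV (W2 m \<circ> U m)"
      by (intro continuous_on_bounded_clinear bounded_clinear_compose
          shift_weights_bounded_clinear [OF sw1] shift_weights_bounded_clinear [OF sw2]; simp)+
    fix z assume "z \<in> range (wprod W1 m)"
    then obtain x where x: "z = wprod W1 m x"
      by blast
    have "U (Suc m) (W1 m (wprod W1 m x)) = U (Suc m) (wprod W1 (Suc m) x)"
      by simp
    also have "\<dots> = wprod W2 (Suc m) (U0 x)"
      by (rule U(2))
    also have "\<dots> = W2 m (U m (wprod W1 m x))"
      by (simp add: U(2))
    finally show "(U (Suc m) \<circ> W1 m) z = (W2 m \<circ> U m) z"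
      by (simp add: x)
  qed
  then show ?thesis
    using that U(1) by auto
qed

lemma unitary_l2_diagonal:
  assumes U: "\<And>n. unitary (U n)"
  shows "unitary_l2 (\<lambda>h n. U n (h n))"
proof -
  have bc: "bounded_clinear (U n)" and norm_U: "norm (U n x) = norm x" for n x
    using U by (simp_all add: unitary_def)
  have norm_sq: "(\<lambda>n. (norm (U n (h n)))\<^sup>2) = (\<lambda>n. (norm (h n))\<^sup>2)" for h
    by (simp add: norm_U)
  have onto: "\<exists>h\<in>l2seq. (\<lambda>n. U n (h n)) = g" if g: "g \<in> l2seq" for g
  proof (rule bexI)
    show "(\<lambda>n. adjoint (U n) (g n)) \<in> l2seq"
      using g by (simp add: l2seq_def norm_adjoint_unitary [OF U])
    show "(\<lambda>n. U n (adjoint (U n) (g n))) = g"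
      by (simp add: unitary_apply_adjoint [OF U])
  qed
  show ?thesis
    unfolding unitary_l2_def
    using onto bounded_clinearD [OF bc] by (simp add: l2seq_def l2norm_def norm_sq)
qed

lemma norm_wprod_eq_imp_unit_equiv:
  fixes W1 :: "nat \<Rightarrow> 'a::complex_hilbert \<Rightarrow> 'a" and W2 :: "nat \<Rightarrow> 'b::complex_hilbert \<Rightarrow> 'b"
  assumes sw1: "shift_weights_dense W1" and sw2: "shift_weights_dense W2"
    and "unitary U0" and "\<And>i x. norm (wprod W1 i x) = norm (wprod W2 i (U0 x))"
  shows "unit_equiv_l2 (wshift W1) (wshift W2)"
proof -
  obtain U where U: "\<And>i. unitary (U i)" "\<And>m y. U (Suc m) (W1 m y) = W2 m (U m y)"
    using intertwining_unitaries [OF assms] by blast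
  have "U 0 0 = 0"
    using U(1) by (simp add: unitary_def bounded_clinear_zero)
  then have "(\<lambda>n. U n (wshift W1 h n)) = wshift W2 (\<lambda>n. U n (h n))" for h
    by (intro ext, case_tac n) (simp_all add: wshift_def U(2))
  then show ?thesis
    unfolding unit_equiv_l2_def using unitary_l2_diagonal [OF U(1)]
    by (intro exI [of _ "\<lambda>h n. U n (h n)"]) simp
qed

lemma op_abs_wprod_conj_iff:
  fixes W1 :: "nat \<Rightarrow> 'a::complex_hilbert \<Rightarrow> 'a" and W2 :: "nat \<Rightarrow> 'b::complex_hilbert \<Rightarrow> 'b"
  assumes sw1: "shift_weights_dense W1" and sw2: "shift_weights_dense W2" and U0: "unitary U0"
  shows "(\<forall>i\<ge>1. op_abs (wprod W1 i) = adjoint U0 \<circ> op_abs (wprod W2 i) \<circ> U0)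
      \<longleftrightarrow> (\<forall>i x. norm (wprod W1 i x) = norm (wprod W2 i (U0 x)))"
proof -
  have abs_iff: "op_abs (wprod W1 i) = adjoint U0 \<circ> op_abs (wprod W2 i) \<circ> U0
      \<longleftrightarrow> (\<forall>x. norm (wprod W1 i x) = norm (wprod W2 i (U0 x)))" for i
    by (rule op_abs_unitary_conj_iff [OF bounded_clinear_wprod [OF sw1] bounded_clinear_wprod [OF sw2] U0])
  \<comment> \<open>for \<open>i = 0\<close> the norm identity just says that \<open>U\<^sub>0\<close> is isometric\<close>
  have "norm (wprod W1 0 x) = norm (wprod W2 0 (U0 x))" for x
    using U0 by (simp add: unitary_def)
  then show ?thesis
    using abs_iff by (metis One_nat_def less_eq_Suc_le not_gr0)
qed

theorem mainTheorem7:
  fixes W1 :: "nat \<Rightarrow> 'a::complex_hilbert \<Rightarrow> 'a"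
    and W2 :: "nat \<Rightarrow> 'b::complex_hilbert \<Rightarrow> 'b"
  assumes "\<exists>x::'a. x \<noteq> 0" and "\<exists>y::'b. y \<noteq> 0"
    and "shift_weights_dense W1" and "shift_weights_dense W2"
  shows "unit_equiv_l2 (wshift W1) (wshift W2) \<longleftrightarrow>
    (\<exists>U0 :: 'a \<Rightarrow> 'b. unitary U0 \<and>
       (\<forall>i\<ge>1. op_abs (wprod W1 i) = adjoint U0 \<circ> op_abs (wprod W2 i) \<circ> U0))"
proof -
  have "unit_equiv_l2 (wshift W1) (wshift W2) \<longleftrightarrow>
      (\<exists>U0 :: 'a \<Rightarrow> 'b. unitary U0 \<and> (\<forall>i x. norm (wprod W1 i x) = norm (wprod W2 i (U0 x))))"
  proof
    assume "unit_equiv_l2 (wshift W1) (wshift W2)"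
    then obtain U0 where "unitary U0" "\<And>i x. norm (wprod W1 i x) = norm (wprod W2 i (U0 x))"
      using unit_equiv_imp_norm_wprod_eq [OF assms(3,4)] by blast
    then show "\<exists>U0. unitary U0 \<and> (\<forall>i x. norm (wprod W1 i x) = norm (wprod W2 i (U0 x)))"
      by blast
  qed (use norm_wprod_eq_imp_unit_equiv [OF assms(3,4)] in blast)
  also have "\<dots> \<longleftrightarrow> (\<exists>U0 :: 'a \<Rightarrow> 'b. unitary U0 \<and>
       (\<forall>i\<ge>1. op_abs (wprod W1 i) = adjoint U0 \<circ> op_abs (wprod W2 i) \<circ> U0))"
    by (intro ex_cong1 conj_cong refl) (use op_abs_wprod_conj_iff [OF assms(3,4)] in blast)
  finally show ?thesis .
qed

end
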